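(* Let $\sigma\in\mathcal{S}_n(132)$, and let $s$ be the number of elements $(i,j)\in\mathcal{E}(\sigma)$ satisfying $i+j<n$. Then the number of Schröder permutations $\pi\in\mathcal{S}_n$ with $\phi(\pi)=\sigma$ equals $2^s$.
   Context: $\mathcal{S}_n(T)$ is the set of permutations of $\{1,\dots,n\}$ avoiding every pattern in $T$ (a permutation avoids $\tau\in\mathcal{S}_k$ if no subsequence of length $k$ is in the same relative order as $\tau$). A Schröder permutation is one avoiding both $1243$ and $2143$. Represent $\pi\in\mathcal{S}_n$ by an $n\times n$ array, rows $i$ numbered top to bottom, columns $j$ left to right, with a dot in square $(i,\pi_i)$. The diagram $D(\pi)$ is the set of squares $(i,j)$ with $\pi_i>j$ and $\pi^{-1}(j)>i$. The essential set $\mathcal{E}(\pi)$ is the set of $(i,j)\in D(\pi)$ with $(i+1,j)\notin D(\pi)$ and $(i,j+1)\notin D(\pi)$ (squares outside the array count as not in $D(\pi)$). The rank of $(i,j)$ with respect to $\pi$ is $\rho_\pi(i,j)=\#\{k<i:\pi_k<j\}$; $\mathcal{E}_r(\pi)$ is the set of elements of $\mathcal{E}(\pi)$ of rank $r$. A permutation is uniquely determined by its essential set together with the ranks of its elements (Fulton). For a Schröder permutation $\pi\in\mathcal{S}_n$, let $\mathcal{E}^*(\pi)$ be obtained from $\mathcal{E}(\pi)$ by replacing each $(i,j)\in\mathcal{E}_1(\pi)$ by $(i-1,j-1)$; there is a unique $\sigma\in\mathcal{S}_n$ with $\mathcal{E}(\sigma)=\mathcal{E}^*(\pi)$ and all elements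 of $\mathcal{E}(\sigma)$ of rank $0$ (with respect to $\sigma$), and one sets $\phi(\pi)=\sigma$; this $\sigma$ avoids $132$. *)

theory Defs
  imports "HOL-Combinatorics.Permutations"
begin

text \<open>Permutations of {1..n} are functions \<pi> with \<pi> permutes {1..n}
  (so \<pi> i = i outside {1..n}). Rows i and columns j range over {1..n}.\<close>

definition contains_pattern :: "nat \<Rightarrow> (nat \<Rightarrow> nat) \<Rightarrow> nat list \<Rightarrow> bool" where
  "contains_pattern n \<pi> \<tau> \<longleftrightarrow>
     (\<exists>f. strict_mono_on {0..<length \<tau>} f \<and> (\<forall>a<length \<tau>. f a \<in> {1..n}) \<and>
          (\<forall>a<length \<tau>. \<forall>b<length \<tau>. \<pi> (f a) < \<pi> (f b) \<longleftrightarrow> \<tau> ! a < \<tau> ! b))"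

definition avoids :: "nat \<Rightarrow> (nat \<Rightarrow> nat) \<Rightarrow> nat list \<Rightarrow> bool" where
  "avoids n \<pi> \<tau> \<longleftrightarrow> \<not> contains_pattern n \<pi> \<tau>"

definition schroeder :: "nat \<Rightarrow> (nat \<Rightarrow> nat) \<Rightarrow> bool" where
  "schroeder n \<pi> \<longleftrightarrow> avoids n \<pi> [1,2,4,3] \<and> avoids n \<pi> [2,1,4,3]"

definition diagram :: "nat \<Rightarrow> (nat \<Rightarrow> nat) \<Rightarrow> (nat \<times> nat) set" where
  "diagram n \<pi> = {(i,j). i \<in> {1..n} \<and> j \<in> {1..n} \<and> \<pi> i > j \<and> inv \<pi> j > i}"

definition ess :: "nat \<Rightarrow> (nat \<Rightarrow> nat) \<Rightarrow> (nat \<times> nat) set" where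
  "ess n \<pi> = {(i,j). (i,j) \<in> diagram n \<pi> \<and> (i+1,j) \<notin> diagram n \<pi> \<and> (i,j+1) \<notin> diagram n \<pi>}"

definition rank :: "(nat \<Rightarrow> nat) \<Rightarrow> nat \<times> nat \<Rightarrow> nat" where
  "rank \<pi> ij = card {k. 1 \<le> k \<and> k < fst ij \<and> \<pi> k < snd ij}"

definition ess_star :: "nat \<Rightarrow> (nat \<Rightarrow> nat) \<Rightarrow> (nat \<times> nat) set" where
  "ess_star n \<pi> = {e \<in> ess n \<pi>. rank \<pi> e \<noteq> 1}
                 \<union> (\<lambda>(i,j). (i-1, j-1)) ` {e \<in> ess n \<pi>. rank \<pi> e = 1}"

definition phi :: "nat \<Rightarrow> (nat \<Rightarrow> nat) \<Rightarrow> (nat \<Rightarrow> nat)" where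
  "phi n \<pi> = (THE \<sigma>. \<sigma> permutes {1..n} \<and> ess n \<sigma> = ess_star n \<pi> \<and>
                      (\<forall>e\<in>ess n \<sigma>. rank \<sigma> e = 0))"

end

theory Submission
  imports Defs
begin

text \<open>
  Row \<open>i\<close> of the diagram of \<open>\<pi>\<close> consists of the values below \<open>\<pi> i\<close> that do not
  occur among \<open>\<pi> 1, \<dots>, \<pi> (i - 1)\<close>; there are \<^term>\<open>lehmer \<pi> i\<close> of them (the Lehmer
  code), and the rank of a cell counts the earlier values below it. Let
  \<^term>\<open>prefix_min n \<pi> i\<close> be the minimum of the earlier values.

  A 132-avoiding \<open>\<sigma>\<close> has only cells of rank 0, i.e. it is dominant: its rows are initial
  segments, its Lehmer code \<open>L\<close> is weakly decreasing, and its essential set consists of the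
  corners \<open>(i, L i)\<close> of this shape.

  In a Schroeder permutation \<open>\<pi>\<close> every cell has rank at most 1, so the only earlier value
  that can lie below a cell is the prefix minimum: row \<open>i\<close> is an initial segment with a
  hole at \<open>prefix_min n \<pi> i\<close>, its cells have rank 0 left of the hole and rank 1 right of
  it. Moving the rank-1 cells one step up and left yields the shape with row lengths
  \<^term>\<open>phi_code n \<pi>\<close>, whose corners are exactly \<open>\<E>\<^sup>*(\<pi>)\<close>; hence
  \<open>phi n \<pi> = \<sigma>\<close> iff \<open>phi_code n \<pi> = L\<close>.

  Such a \<open>\<pi>\<close> is determined by its left-to-right minima, i.e. by the positions where the
  prefix minimum drops. These positions form a set of corners of \<open>L\<close> that contains
  every corner \<open>(i, L i)\<close> with \<open>i + L i = n\<close>, and every such set is realised. Hence the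
  fibre has \<open>2\<^sup>s\<close> elements, \<open>s\<close> counting the corners with \<open>i + L i < n\<close>.
\<close>

section \<open>Lehmer codes and prefix minima\<close>

definition values_before :: "(nat \<Rightarrow> nat) \<Rightarrow> nat \<Rightarrow> nat set" where
  "values_before \<pi> i = \<pi> ` {1..<i}"

definition lehmer :: "(nat \<Rightarrow> nat) \<Rightarrow> nat \<Rightarrow> nat" where
  "lehmer \<pi> i = card {j. 1 \<le> j \<and> j < \<pi> i \<and> j \<notin> values_before \<pi> i}"

text \<open>\<open>Suc n\<close> plays the role of \<open>\<infinity>\<close>, the minimum of the empty prefix.\<close>

definition prefix_min :: "nat \<Rightarrow> (nat \<Rightarrow> nat) \<Rightarrow> nat \<Rightarrow> nat" where
  "prefix_min n \<pi> i = Min (insert (Suc n) (values_before \<pi> i))"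

lemma finite_values_before [simp]: "finite (values_before \<pi> i)"
  by (simp add: values_before_def)

lemma values_before_empty [simp]: "i \<le> 1 \<Longrightarrow> values_before \<pi> i = {}"
  by (simp add: values_before_def)

lemma values_before_Suc: "1 \<le> i \<Longrightarrow> values_before \<pi> (Suc i) = insert (\<pi> i) (values_before \<pi> i)"
  by (auto simp: values_before_def atLeastLessThanSuc)

lemma prefix_min_le: "x \<in> values_before \<pi> i \<Longrightarrow> prefix_min n \<pi> i \<le> x"
  by (simp add: prefix_min_def)

lemma prefix_min_le_Suc: "prefix_min n \<pi> i \<le> Suc n"
  by (simp add: prefix_min_def)

lemma prefix_min_empty [simp]: "i \<le> 1 \<Longrightarrow> prefix_min n \<pi> i = Suc n"
  by (simp add: prefix_min_def)

lemma prefix_min_Suc: "1 \<le> i \<Longrightarrow> prefix_min n \<pi> (Suc i) = min (prefix_min n \<pi> i) (\<pi> i)"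
  unfolding prefix_min_def by (simp add: values_before_Suc insert_commute[of "Suc n"] min.commute)

lemma notin_values_before_if_less_prefix_min:
  "j < prefix_min n \<pi> i \<Longrightarrow> j \<notin> values_before \<pi> i"
  by (metis leD prefix_min_le)

lemma rank_mono: "i \<le> i' \<Longrightarrow> j \<le> j' \<Longrightarrow> rank \<pi> (i, j) \<le> rank \<pi> (i', j')"
  unfolding rank_def by (rule card_mono) (rule finite_subset[of _ "{..<i'}"], auto)

context
  fixes n :: nat and \<pi> :: "nat \<Rightarrow> nat"
  assumes perm: "\<pi> permutes {1..n}"
begin

lemma perm_in: "i \<in> {1..n} \<Longrightarrow> \<pi> i \<in> {1..n}"
  by (rule permutes_in_image[OF perm, THEN iffD2])

lemma perm_out: "i \<notin> {1..n} \<Longrightarrow> \<pi> i = i"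
  using perm by (rule permutes_not_in)

lemma perm_inj: "inj \<pi>"
  using perm by (rule permutes_inj)

lemma notin_values_before_self: "\<pi> i \<notin> values_before \<pi> i"
  using perm_inj by (auto simp: values_before_def inj_eq)

lemma values_before_pos: "p \<in> values_before \<pi> i \<Longrightarrow> 0 < p"
  using perm_in perm_out by (fastforce simp: values_before_def)

lemma card_values_before: "card (values_before \<pi> i) = i - 1"
  using perm_inj by (simp add: values_before_def card_image inj_on_subset)

lemma values_before_subset: "i \<le> Suc n \<Longrightarrow> values_before \<pi> i \<subseteq> {1..n}"
  using perm_in by (auto simp: values_before_def)

lemma values_before_all: "values_before \<pi> (Suc n) = {1..n}"
  using perm by (simp add: values_before_def atLeastLessThanSuc_atLeastAtMost permutes_image)

lemma diagram_iff:
  "(i, j) \<in> diagram n \<pi> \<longleftrightarrow> i \<in> {1..n} \<and> 1 \<le> j \<and> j < \<pi> i \<and> j \<notin> values_before \<pi> i"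
proof (cases "i \<in> {1..n}")
  case i: True
  have "i < inv \<pi> j \<longleftrightarrow> j \<notin> values_before \<pi> (Suc i)" if j: "j \<in> {1..n}" for j
  proof -
    have "inv \<pi> j \<in> {1..n}" using j permutes_in_image[OF permutes_inv[OF perm]] by simp
    moreover have "\<pi> (inv \<pi> j) = j" using permutes_inverses(1)[OF perm] by simp
    moreover have "\<pi> (inv \<pi> j) \<in> \<pi> ` {1..<Suc i} \<longleftrightarrow> inv \<pi> j \<in> {1..<Suc i}"
      by (rule inj_image_mem_iff[OF perm_inj])
    ultimately show ?thesis by (auto simp: values_before_def)
  qed
  moreover have "j \<in> {1..n}" if "1 \<le> j" "j < \<pi> i" using that perm_in[OF i] by auto
  ultimately show ?thesis
    using i by (auto simp: diagram_def values_before_Suc)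
next
  case False
  then show ?thesis by (auto simp: diagram_def)
qed

lemma rank_eq: "rank \<pi> (i, j) = card {p \<in> values_before \<pi> i. p < j}"
proof -
  let ?K = "{k. 1 \<le> k \<and> k < i \<and> \<pi> k < j}"
  have "card (\<pi> ` ?K) = card ?K"
    by (rule card_image, rule inj_on_subset[OF perm_inj]) simp
  moreover have "\<pi> ` ?K = {p \<in> values_before \<pi> i. p < j}"
    by (auto simp: values_before_def)
  ultimately show ?thesis by (simp add: rank_def)
qed

lemma rank_eq_0_if_le_prefix_min: "j \<le> prefix_min n \<pi> i \<Longrightarrow> rank \<pi> (i, j) = 0"
  using prefix_min_le[of _ \<pi> i n] by (fastforce simp: rank_eq)

lemma lehmer_plus_rank:
  "i \<in> {1..n} \<Longrightarrow> lehmer \<pi> i + rank \<pi> (i, \<pi> i) = \<pi> i - 1"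
proof -
  let ?A = "{j. 1 \<le> j \<and> j < \<pi> i \<and> j \<notin> values_before \<pi> i}"
  let ?B = "{p \<in> values_before \<pi> i. p < \<pi> i}"
  have "{1..<\<pi> i} = ?A \<union> ?B"
    by (auto dest: values_before_pos)
  moreover have "finite ?B" "?A \<inter> ?B = {}" by auto
  ultimately have "card {1..<\<pi> i} = card ?A + card ?B"
    by (simp add: card_Un_disjoint)
  then show ?thesis by (simp add: lehmer_def rank_eq)
qed

lemma lehmer_less: "i \<in> {1..n} \<Longrightarrow> lehmer \<pi> i < \<pi> i"
  using lehmer_plus_rank perm_in by fastforce

lemma lehmer_le: "i \<in> {1..n} \<Longrightarrow> lehmer \<pi> i \<le> n - i"
proof -
  assume i: "i \<in> {1..n}"
  have "lehmer \<pi> i \<le> card ({1..n} - values_before \<pi> (Suc i))"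
    unfolding lehmer_def using i perm_in[OF i] by (intro card_mono) (auto simp: values_before_Suc)
  also have "\<dots> = n - i"
    using i values_before_subset[of "Suc i"] by (simp add: card_Diff_subset card_values_before)
  finally show ?thesis .
qed

lemma lehmer_last: "lehmer \<pi> n = 0"
  using lehmer_le[of n] perm_out[of 0] by (cases "n = 0") (auto simp: lehmer_def)

lemma lehmer_Suc_last: "lehmer \<pi> (Suc n) = 0"
  using perm_out[of "Suc n"] values_before_all by (auto simp: lehmer_def)

lemma prefix_min_pos: "0 < prefix_min n \<pi> i"
  unfolding prefix_min_def using values_before_pos by simp

lemma prefix_min_in:
  assumes "2 \<le> i"
  shows "prefix_min n \<pi> i \<in> values_before \<pi> i"
proof -
  let ?V = "values_before \<pi> i"
  have first: "\<pi> 1 \<in> ?V" using assms by (simp add: values_before_def)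
  have "\<pi> 1 \<le> Suc n"
  proof (cases "1 \<in> {1..n}")
    case True then show ?thesis using perm_in[OF True] by simp
  next
    case False then show ?thesis using perm_out[OF False] by simp
  qed
  then have "Min ?V \<le> Suc n" using Min_le[OF finite_values_before first] by linarith
  moreover have "?V \<noteq> {}" using first by blast
  ultimately have "prefix_min n \<pi> i = Min ?V" by (simp add: prefix_min_def Min_insert)
  then show ?thesis using Min_in[OF finite_values_before \<open>?V \<noteq> {}\<close>] by simp
qed

lemma prefix_min_last: "prefix_min n \<pi> (Suc n) = 1"
proof (cases "n = 0")
  case False
  then have "prefix_min n \<pi> (Suc n) \<le> 1"
    using values_before_all by (intro prefix_min_le) simp
  then show ?thesis using prefix_min_pos[of "Suc n"] by simp
qed (simp add: prefix_min_def)

lemma prefix_min_neq: "i \<in> {1..n} \<Longrightarrow> \<pi> i \<noteq> prefix_min n \<pi> i"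
proof (cases "i = 1")
  case True
  then show "i \<in> {1..n} \<Longrightarrow> ?thesis" using perm_in[of i] by auto
next
  case False
  then show "i \<in> {1..n} \<Longrightarrow> ?thesis"
    using prefix_min_in[of i] notin_values_before_self[of i] by auto
qed

lemma rank_pos_if_gt_prefix_min:
  assumes "prefix_min n \<pi> i < j" "j \<le> Suc n"
  shows "0 < rank \<pi> (i, j)"
proof -
  have "2 \<le> i"
    using assms by (cases "i \<le> 1") auto
  then have "prefix_min n \<pi> i \<in> {p \<in> values_before \<pi> i. p < j}"
    using prefix_min_in assms(1) by simp
  then have "{p \<in> values_before \<pi> i. p < j} \<noteq> {}" by blast
  then show ?thesis
    unfolding rank_eq by (simp add: card_gt_0_iff)
qed

lemma lehmer_at_ltr_min:
  assumes "i \<in> {1..n}" "\<pi> i < prefix_min n \<pi> i"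
  shows "lehmer \<pi> i = \<pi> i - 1"
proof -
  have "rank \<pi> (i, \<pi> i) = 0"
    by (rule rank_eq_0_if_le_prefix_min[of "\<pi> i"]) (use assms(2) in simp)
  then show ?thesis using lehmer_plus_rank[OF assms(1)] by simp
qed

lemma lehmer_at_non_ltr_min:
  assumes i: "i \<in> {1..n}" and gt: "prefix_min n \<pi> i < \<pi> i"
  shows "prefix_min n \<pi> i - 1 \<le> lehmer \<pi> i" "lehmer \<pi> i + 2 \<le> \<pi> i"
proof -
  have "{1..<prefix_min n \<pi> i} \<subseteq> {j. 1 \<le> j \<and> j < \<pi> i \<and> j \<notin> values_before \<pi> i}"
    using gt notin_values_before_if_less_prefix_min by auto
  then have "card {1..<prefix_min n \<pi> i} \<le> lehmer \<pi> i"
    unfolding lehmer_def by (rule card_mono[rotated]) simp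
  then show "prefix_min n \<pi> i - 1 \<le> lehmer \<pi> i" by simp
  have "0 < rank \<pi> (i, \<pi> i)"
    using rank_pos_if_gt_prefix_min gt perm_in[OF i] by simp
  then show "lehmer \<pi> i + 2 \<le> \<pi> i"
    using lehmer_plus_rank[OF i] gt by linarith
qed

lemma ltr_min_if_lehmer_less:
  assumes i: "i \<in> {1..n}" and less: "lehmer \<pi> i < prefix_min n \<pi> i - 1"
  shows "\<pi> i = Suc (lehmer \<pi> i)" "prefix_min n \<pi> (Suc i) = \<pi> i"
proof -
  have ltr: "\<pi> i < prefix_min n \<pi> i"
  proof (rule ccontr)
    assume "\<not> \<pi> i < prefix_min n \<pi> i"
    then have "prefix_min n \<pi> i < \<pi> i" using prefix_min_neq[OF i] by simp
    then show False using lehmer_at_non_ltr_min(1)[OF i] less by linarith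
  qed
  then show "\<pi> i = Suc (lehmer \<pi> i)"
    using lehmer_at_ltr_min[OF i] perm_in[OF i] by simp
  show "prefix_min n \<pi> (Suc i) = \<pi> i"
    using prefix_min_Suc[of i n \<pi>] i ltr by simp
qed

lemma not_ltr_min_if_lehmer_ge:
  assumes i: "i \<in> {1..n}" and ge: "prefix_min n \<pi> i - 1 \<le> lehmer \<pi> i"
  shows "prefix_min n \<pi> i < \<pi> i" "prefix_min n \<pi> (Suc i) = prefix_min n \<pi> i"
proof -
  show "prefix_min n \<pi> i < \<pi> i"
  proof (rule ccontr)
    assume "\<not> prefix_min n \<pi> i < \<pi> i"
    then have "\<pi> i < prefix_min n \<pi> i" using prefix_min_neq[OF i] by simp
    moreover have "1 \<le> \<pi> i" using perm_in[OF i] by simp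
    ultimately show False using lehmer_at_ltr_min[OF i] ge by linarith
  qed
  then show "prefix_min n \<pi> (Suc i) = prefix_min n \<pi> i"
    using prefix_min_Suc[of i n \<pi>] i by simp
qed

lemma prefix_min_Suc_eq_min_lehmer:
  assumes i: "i \<in> {1..n}"
  shows "prefix_min n \<pi> (Suc i) - 1 = min (prefix_min n \<pi> i - 1) (lehmer \<pi> i)"
proof (cases "lehmer \<pi> i < prefix_min n \<pi> i - 1")
  case True
  then show ?thesis using ltr_min_if_lehmer_less[OF i True] by simp
next
  case False
  then show ?thesis using not_ltr_min_if_lehmer_ge[OF i] by simp
qed

end

lemma card_gaps_less:
  fixes x y :: nat
  assumes "x \<notin> P" "1 \<le> x" "x < y"
  shows "card {j. 1 \<le> j \<and> j < x \<and> j \<notin> P} < card {j. 1 \<le> j \<and> j < y \<and> j \<notin> P}"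
proof (rule psubset_card_mono)
  have "x \<in> {j. 1 \<le> j \<and> j < y \<and> j \<notin> P} - {j. 1 \<le> j \<and> j < x \<and> j \<notin> P}"
    using assms by simp
  moreover have "{j. 1 \<le> j \<and> j < x \<and> j \<notin> P} \<subseteq> {j. 1 \<le> j \<and> j < y \<and> j \<notin> P}"
    using assms by auto
  ultimately show "{j. 1 \<le> j \<and> j < x \<and> j \<notin> P} \<subset> {j. 1 \<le> j \<and> j < y \<and> j \<notin> P}"
    by blast
qed simp

lemma lehmer_inj:
  assumes \<sigma>: "\<sigma> permutes {1..n}" and \<tau>: "\<tau> permutes {1..n}"
    and eq: "\<And>i. i \<in> {1..n} \<Longrightarrow> lehmer \<sigma> i = lehmer \<tau> i"
  shows "\<sigma> = \<tau>"
proof -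
  have agree: "i \<in> {1..n} \<longrightarrow> \<sigma> i = \<tau> i" for i
  proof (induction i rule: less_induct)
    case (less i)
    show ?case
    proof
      assume i: "i \<in> {1..n}"
      have same: "values_before \<sigma> i = values_before \<tau> i"
        unfolding values_before_def using less.IH i by (intro image_cong) auto
      have ns: "\<sigma> i \<notin> values_before \<sigma> i" and nt: "\<tau> i \<notin> values_before \<sigma> i"
        using notin_values_before_self[OF \<sigma>] notin_values_before_self[OF \<tau>] same by auto
      have s1: "1 \<le> \<sigma> i" and t1: "1 \<le> \<tau> i" using perm_in[OF \<sigma> i] perm_in[OF \<tau> i] by auto
      have "\<sigma> i < \<tau> i \<Longrightarrow> lehmer \<sigma> i < lehmer \<tau> i"
        unfolding lehmer_def same[symmetric] by (rule card_gaps_less[OF ns s1])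
      moreover have "\<tau> i < \<sigma> i \<Longrightarrow> lehmer \<tau> i < lehmer \<sigma> i"
        unfolding lehmer_def same[symmetric] by (rule card_gaps_less[OF nt t1])
      ultimately show "\<sigma> i = \<tau> i"
        using eq[OF i] by (cases rule: linorder_cases[of "\<sigma> i" "\<tau> i"]) auto
    qed
  qed
  show ?thesis
  proof
    fix i show "\<sigma> i = \<tau> i"
      using agree[of i] perm_out[OF \<sigma>, of i] perm_out[OF \<tau>, of i] by (cases "i \<in> {1..n}") simp_all
  qed
qed

lemma card_lehmer_code_space: "card (\<Pi>\<^sub>E i\<in>{1..n}. {0..n - i}) = fact n"
proof -
  have "card (\<Pi>\<^sub>E i\<in>{1..n}. {0..n - i}) = (\<Prod>i\<in>{1..n}. Suc n - i)"
    by (simp add: card_PiE Suc_diff_le)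
  also have "\<dots> = \<Prod>{1..n}"
    using prod.atLeastAtMost_rev[of "\<lambda>i. i" 1 n] by simp
  finally show ?thesis by (simp add: fact_prod)
qed

lemma lehmer_surj:
  assumes c: "\<And>i. i \<in> {1..n} \<Longrightarrow> c i \<le> n - i"
  obtains \<tau> where "\<tau> permutes {1..n}" "\<And>i. i \<in> {1..n} \<Longrightarrow> lehmer \<tau> i = c i"
proof -
  define perms where "perms = {\<tau>. \<tau> permutes {1..n}}"
  define codes where "codes = (\<Pi>\<^sub>E i\<in>{1..n}. {0..n - i})"
  define code_of where "code_of = (\<lambda>\<tau>. restrict (lehmer \<tau>) {1..n})"
  have "code_of ` perms \<subseteq> codes"
    using lehmer_le by (auto simp: perms_def codes_def code_of_def)
  moreover have "inj_on code_of perms"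
  proof
    fix \<sigma> \<tau> assume "\<sigma> \<in> perms" "\<tau> \<in> perms" and eq: "code_of \<sigma> = code_of \<tau>"
    then show "\<sigma> = \<tau>"
    proof (intro lehmer_inj[of \<sigma> n \<tau>])
      fix i assume "i \<in> {1..n}"
      then show "lehmer \<sigma> i = lehmer \<tau> i" using fun_cong[OF eq, of i] by (simp add: code_of_def)
    qed (simp_all add: perms_def)
  qed
  moreover have "card perms = fact n"
    unfolding perms_def by (rule card_permutations) auto
  moreover have "card codes = fact n"
    unfolding codes_def by (rule card_lehmer_code_space)
  ultimately have "code_of ` perms = codes"
    by (intro card_subset_eq) (auto simp: codes_def card_image intro!: finite_PiE)
  moreover have "restrict c {1..n} \<in> codes"
    using c by (auto simp: codes_def)
  ultimately obtain \<tau> where \<tau>: "\<tau> \<in> perms" and eq: "code_of \<tau> = restrict c {1..n}"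
    by (metis imageE)
  show ?thesis
  proof (rule that)
    show "\<tau> permutes {1..n}" using \<tau> by (simp add: perms_def)
    fix i assume "i \<in> {1..n}"
    then show "lehmer \<tau> i = c i" using fun_cong[OF eq, of i] by (simp add: code_of_def)
  qed
qed

section \<open>Patterns and ranks\<close>

lemma contains_patternI:
  assumes "length ps = length \<tau>" "sorted_wrt (<) ps" "set ps \<subseteq> {1..n}"
    and "\<forall>a<length \<tau>. \<forall>b<length \<tau>. \<pi> (ps ! a) < \<pi> (ps ! b) \<longleftrightarrow> \<tau> ! a < \<tau> ! b"
  shows "contains_pattern n \<pi> \<tau>"
  unfolding contains_pattern_def
proof (intro exI[of _ "(!) ps"] conjI)
  show "strict_mono_on {0..<length \<tau>} ((!) ps)"
  proof (rule strict_mono_onI)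
    fix a b assume "a \<in> {0..<length \<tau>}" "b \<in> {0..<length \<tau>}" "a < b"
    then show "ps ! a < ps ! b" using sorted_wrt_nth_less[OF assms(2)] assms(1) by simp
  qed
  show "\<forall>a<length \<tau>. ps ! a \<in> {1..n}"
    using assms(1,3) nth_mem by (metis subsetD)
qed (rule assms(4))

lemma obtain_two_less:
  fixes K :: "'a::linorder set"
  assumes "finite K" "\<not> card K \<le> 1"
  obtains x y where "x \<in> K" "y \<in> K" "x < y"
proof -
  obtain a b where ab: "a \<in> K" "b \<in> K" "a \<noteq> b"
    using assms card_le_Suc0_iff_eq[OF assms(1)] by auto
  show ?thesis
  proof (cases "a < b")
    case True then show ?thesis using that ab by blast
  next
    case False then show ?thesis using that ab by (metis linorder_neqE)
  qed
qed

context
  fixes n :: nat and \<pi> :: "nat \<Rightarrow> nat"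
  assumes perm: "\<pi> permutes {1..n}"
begin

lemma diagram_iff_inversion:
  "(i, j) \<in> diagram n \<pi> \<longleftrightarrow> (\<exists>d\<in>{1..n}. i \<in> {1..n} \<and> i < d \<and> j = \<pi> d \<and> \<pi> d < \<pi> i)"
proof
  assume "(i, j) \<in> diagram n \<pi>"
  moreover have "\<pi> (inv \<pi> j) = j" "j \<in> {1..n} \<Longrightarrow> inv \<pi> j \<in> {1..n}"
    using permutes_inverses(1)[OF perm] permutes_in_image[OF permutes_inv[OF perm]] by auto
  ultimately show "\<exists>d\<in>{1..n}. i \<in> {1..n} \<and> i < d \<and> j = \<pi> d \<and> \<pi> d < \<pi> i"
    unfolding diagram_def by (intro bexI[of _ "inv \<pi> j"]) auto
next
  assume "\<exists>d\<in>{1..n}. i \<in> {1..n} \<and> i < d \<and> j = \<pi> d \<and> \<pi> d < \<pi> i"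
  then obtain d where "d \<in> {1..n}" "i \<in> {1..n}" "i < d" "j = \<pi> d" "\<pi> d < \<pi> i" by blast
  moreover have "inv \<pi> (\<pi> d) = d" using permutes_inverses(2)[OF perm] by simp
  ultimately show "(i, j) \<in> diagram n \<pi>"
    unfolding diagram_def using perm_in[OF perm] by auto
qed

lemma rank_eq_0_if_avoids_132:
  assumes av: "avoids n \<pi> [1,3,2]" and cell: "(i, j) \<in> diagram n \<pi>"
  shows "rank \<pi> (i, j) = 0"
proof (rule ccontr)
  assume "rank \<pi> (i, j) \<noteq> 0"
  then obtain k where k: "1 \<le> k" "k < i" "\<pi> k < j"
    unfolding rank_def by (metis (no_types, lifting) card.empty empty_Collect_eq fst_conv snd_conv)
  obtain d where d: "d \<in> {1..n}" "i \<in> {1..n}" "i < d" "j = \<pi> d" "\<pi> d < \<pi> i"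
    using cell diagram_iff_inversion by blast
  have "contains_pattern n \<pi> [1,3,2]"
    by (rule contains_patternI[of "[k, i, d]"])
      (use k d in \<open>auto simp: eval_nat_numeral less_Suc_eq all_conj_distrib\<close>)
  with av show False unfolding avoids_def by simp
qed

lemma rank_le_1_if_schroeder:
  assumes S: "schroeder n \<pi>" and cell: "(i, j) \<in> diagram n \<pi>"
  shows "rank \<pi> (i, j) \<le> 1"
proof (rule ccontr)
  assume "\<not> rank \<pi> (i, j) \<le> 1"
  then obtain k1 k2 where k: "1 \<le> k1" "k1 < k2" "k2 < i" "\<pi> k1 < j" "\<pi> k2 < j"
    unfolding rank_def fst_conv snd_conv
    by (rule obtain_two_less[rotated]) auto
  obtain d where d: "d \<in> {1..n}" "i \<in> {1..n}" "i < d" "j = \<pi> d" "\<pi> d < \<pi> i"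
    using cell diagram_iff_inversion by blast
  have "\<pi> k1 \<noteq> \<pi> k2" using k(2) perm_inj[OF perm] by (auto dest: injD)
  then consider "\<pi> k1 < \<pi> k2" | "\<pi> k2 < \<pi> k1" by linarith
  then have "contains_pattern n \<pi> [1,2,4,3] \<or> contains_pattern n \<pi> [2,1,4,3]"
  proof cases
    case 1
    have "contains_pattern n \<pi> [1,2,4,3]"
      by (rule contains_patternI[of "[k1, k2, i, d]"])
        (use k d 1 in \<open>auto simp: eval_nat_numeral less_Suc_eq all_conj_distrib\<close>)
    then show ?thesis ..
  next
    case 2
    have "contains_pattern n \<pi> [2,1,4,3]"
      by (rule contains_patternI[of "[k1, k2, i, d]"])
        (use k d 2 in \<open>auto simp: eval_nat_numeral less_Suc_eq all_conj_distrib\<close>)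
    then show ?thesis ..
  qed
  with S show False unfolding schroeder_def avoids_def by blast
qed

lemma schroeder_if_rank_le_1:
  assumes rank: "\<And>i j. (i, j) \<in> diagram n \<pi> \<Longrightarrow> rank \<pi> (i, j) \<le> 1"
  shows "schroeder n \<pi>"
proof -
  have False if cp: "contains_pattern n \<pi> \<tau>" and \<tau>: "\<tau> = [1,2,4,3] \<or> \<tau> = [2,1,4,3]" for \<tau>
  proof -
    obtain f where f: "strict_mono_on {0..<length \<tau>} f" "\<forall>a<length \<tau>. f a \<in> {1..n}"
      "\<forall>a<length \<tau>. \<forall>b<length \<tau>. \<pi> (f a) < \<pi> (f b) \<longleftrightarrow> \<tau> ! a < \<tau> ! b"
      using cp unfolding contains_pattern_def by blast
    have len: "length \<tau> = 4" using \<tau> by auto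
    have mono: "f 0 < f 1" "f 1 < f 2" "f 2 < f 3"
      by (rule strict_mono_onD[OF f(1)]; use len in simp)+
    have pos: "f 0 \<in> {1..n}" "f 1 \<in> {1..n}" "f 2 \<in> {1..n}" "f 3 \<in> {1..n}"
      using f(2) len by auto
    have "\<pi> (f 0) < \<pi> (f 3)" "\<pi> (f 1) < \<pi> (f 3)" "\<pi> (f 3) < \<pi> (f 2)"
      using f(3)[rule_format, of 0 3] f(3)[rule_format, of 1 3] f(3)[rule_format, of 3 2] len \<tau>
      by auto
    then have cell: "(f 2, \<pi> (f 3)) \<in> diagram n \<pi>"
      and sub: "{f 0, f 1} \<subseteq> {k. 1 \<le> k \<and> k < f 2 \<and> \<pi> k < \<pi> (f 3)}"
      using diagram_iff_inversion pos mono by auto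
    have "rank \<pi> (f 2, \<pi> (f 3)) \<le> 1" using rank[OF cell] .
    moreover have "card {f 0, f 1} \<le> rank \<pi> (f 2, \<pi> (f 3))"
      unfolding rank_def using sub by (simp add: card_mono)
    ultimately have "card {f 0, f 1} \<le> 1" by linarith
    then show False using mono by simp
  qed
  then show ?thesis unfolding schroeder_def avoids_def by blast
qed

end

section \<open>Rows whose cells have rank at most one\<close>

lemma eq_interval_minus_hole_Max:
  fixes R :: "nat set"
  assumes R: "finite R" "R \<noteq> {}" "0 \<notin> R" and h: "h \<notin> R"
    and closed: "\<And>j j'. j \<in> R \<Longrightarrow> 0 < j' \<Longrightarrow> j' < j \<Longrightarrow> j' \<noteq> h \<Longrightarrow> j' \<in> R"
  shows "R = {1..Max R} - {h}"
proof
  show "R \<subseteq> {1..Max R} - {h}"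
  proof
    fix x assume x: "x \<in> R"
    then have "x \<le> Max R" using Max_ge[OF R(1)] by simp
    moreover have "x \<noteq> 0" using R(3) x by metis
    moreover have "x \<noteq> h" using h x by metis
    ultimately show "x \<in> {1..Max R} - {h}" by simp
  qed
  have max: "Max R \<in> R" using R by simp
  show "{1..Max R} - {h} \<subseteq> R"
  proof
    fix x assume x: "x \<in> {1..Max R} - {h}"
    show "x \<in> R"
    proof (cases "x = Max R")
      case False
      then show ?thesis using closed[OF max, of x] x by simp
    qed (use max in simp)
  qed
qed

lemma eq_interval_minus_hole:
  fixes R :: "nat set"
  assumes R: "finite R" "0 \<notin> R" and h: "0 < h" "h \<notin> R"
    and closed: "\<And>j j'. j \<in> R \<Longrightarrow> 0 < j' \<Longrightarrow> j' < j \<Longrightarrow> j' \<noteq> h \<Longrightarrow> j' \<in> R"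
  shows "R = {1..(if h \<le> card R then Suc (card R) else card R)} - {h}"
proof (cases "R = {}")
  case False
  define m where "m = Max R"
  have R_eq: "R = {1..m} - {h}"
    unfolding m_def by (rule eq_interval_minus_hole_Max[OF R(1) False R(2) h(2)]) (fact closed)
  have "m \<in> R" using R(1) False by (simp add: m_def)
  then have "h \<noteq> m" using h(2) by blast
  show ?thesis
  proof (cases "h < m")
    case True
    then have "card R = m - 1" using h(1) R_eq by simp
    then show ?thesis using True R_eq by simp
  next
    case False
    then have "card R = m" using R_eq \<open>h \<noteq> m\<close> by simp
    then show ?thesis using False R_eq \<open>h \<noteq> m\<close> by simp
  qed
qed (use h in simp)

definition row_end :: "nat \<Rightarrow> (nat \<Rightarrow> nat) \<Rightarrow> nat \<Rightarrow> nat" where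
  "row_end n \<pi> i = (if prefix_min n \<pi> i \<le> lehmer \<pi> i then Suc (lehmer \<pi> i) else lehmer \<pi> i)"

context
  fixes n :: nat and \<pi> :: "nat \<Rightarrow> nat"
  assumes perm: "\<pi> permutes {1..n}"
begin

lemma prefix_min_notin_row: "(i, prefix_min n \<pi> i) \<notin> diagram n \<pi>"
proof (cases "2 \<le> i")
  case True
  then show ?thesis using prefix_min_in[OF perm] by (simp add: diagram_iff[OF perm])
next
  case False
  then show ?thesis using perm_in[OF perm, of i] by (auto simp: diagram_iff[OF perm])
qed

text \<open>
  An earlier value below the cell lies at or above the prefix minimum, which is itself an
  earlier value below the cell; rank at most one forces the two to coincide.
\<close>

lemma row_closed_below_if_rank_le_1:
  assumes rank: "rank \<pi> (i, j) \<le> 1" and cell: "(i, j) \<in> diagram n \<pi>"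
    and j': "0 < j'" "j' < j" "j' \<noteq> prefix_min n \<pi> i"
  shows "(i, j') \<in> diagram n \<pi>"
proof -
  let ?below = "{p \<in> values_before \<pi> i. p < j}"
  have "j' \<notin> values_before \<pi> i"
  proof
    assume j'_in: "j' \<in> values_before \<pi> i"
    then have "2 \<le> i" by (cases "i \<le> 1") auto
    then have "prefix_min n \<pi> i \<in> ?below" "j' \<in> ?below"
      using prefix_min_in[OF perm] prefix_min_le[OF j'_in, of n] j'_in j'(2) by auto
    moreover have "card ?below \<le> 1" using rank by (simp add: rank_eq[OF perm])
    moreover have "finite ?below" by simp
    ultimately show False
      using card_le_Suc0_iff_eq[of ?below] j'(3) by (metis One_nat_def)
  qed
  then show ?thesis using cell j' by (simp add: diagram_iff[OF perm])
qed

lemma card_diagram_row: "i \<in> {1..n} \<Longrightarrow> card {j. (i, j) \<in> diagram n \<pi>} = lehmer \<pi> i"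
  by (simp add: diagram_iff[OF perm] lehmer_def)

lemma diagram_Suc_row:
  assumes "(Suc i, j) \<in> diagram n \<pi>" "1 \<le> i" "j < \<pi> i"
  shows "(i, j) \<in> diagram n \<pi>"
  using assms values_before_Suc[of i \<pi>] by (simp add: diagram_iff[OF perm])

lemma diagram_row_if_rank_le_1:
  assumes i: "i \<in> {1..n}" and rank: "\<And>j. (i, j) \<in> diagram n \<pi> \<Longrightarrow> rank \<pi> (i, j) \<le> 1"
  shows "(i, j) \<in> diagram n \<pi> \<longleftrightarrow> 1 \<le> j \<and> j \<le> row_end n \<pi> i \<and> j \<noteq> prefix_min n \<pi> i"
proof -
  define R where "R = {j. (i, j) \<in> diagram n \<pi>}"
  let ?h = "prefix_min n \<pi> i"
  have gap: "R = {1..(if ?h \<le> card R then Suc (card R) else card R)} - {?h}"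
  proof (rule eq_interval_minus_hole)
    show "finite R"
      unfolding R_def by (rule finite_subset[of _ "{1..n}"]) (auto simp: diagram_def)
    show "0 \<notin> R" by (simp add: R_def diagram_def)
    show "?h \<notin> R" using prefix_min_notin_row by (simp add: R_def)
    show "0 < ?h" by (rule prefix_min_pos[OF perm])
    show "j' \<in> R" if "j \<in> R" "0 < j'" "j' < j" "j' \<noteq> ?h" for j j'
    proof -
      have cell: "(i, j) \<in> diagram n \<pi>" using that(1) by (simp add: R_def)
      show ?thesis
        using row_closed_below_if_rank_le_1[OF rank[OF cell] cell that(2-4)] by (simp add: R_def)
    qed
  qed
  have card: "card R = lehmer \<pi> i" unfolding R_def by (rule card_diagram_row[OF i])
  have "R = {1..row_end n \<pi> i} - {?h}"
    unfolding row_end_def using gap unfolding card .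
  then have "j \<in> R \<longleftrightarrow> j \<in> {1..row_end n \<pi> i} - {?h}" by simp
  then show ?thesis by (simp add: R_def)
qed

lemma rank_le_1_if_few_small_values:
  assumes k: "k \<in> {1..n}"
    and few: "card (values_before \<pi> k \<inter> {1..Suc m}) \<le> 1" and code: "lehmer \<pi> k \<le> m"
    and cell: "(k, j) \<in> diagram n \<pi>"
  shows "rank \<pi> (k, j) \<le> 1"
proof -
  let ?P = "values_before \<pi> k"
  have c: "1 \<le> j" "j < \<pi> k" "j \<notin> ?P" using cell diagram_iff[OF perm] by auto
  have "j \<le> Suc m"
  proof (rule ccontr)
    assume "\<not> j \<le> Suc m"
    then have "insert j ({1..Suc m} - ?P) \<subseteq> {j'. 1 \<le> j' \<and> j' < \<pi> k \<and> j' \<notin> ?P}"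
      using c by auto
    then have "card (insert j ({1..Suc m} - ?P)) \<le> lehmer \<pi> k"
      unfolding lehmer_def by (rule card_mono[rotated]) simp
    moreover have "card (insert j ({1..Suc m} - ?P)) = Suc (card ({1..Suc m} - ?P))"
      using \<open>\<not> j \<le> Suc m\<close> by simp
    moreover have "{1..Suc m} - ?P = {1..Suc m} - (?P \<inter> {1..Suc m})" by auto
    then have "card ({1..Suc m} - ?P) = Suc m - card (?P \<inter> {1..Suc m})"
      by (simp add: card_Diff_subset)
    ultimately show False using few code by linarith
  qed
  then have "{p \<in> ?P. p < j} \<subseteq> ?P \<inter> {1..Suc m}"
    using values_before_pos[OF perm] by fastforce
  then have "card {p \<in> ?P. p < j} \<le> card (?P \<inter> {1..Suc m})" by (intro card_mono) simp_all
  then show ?thesis using few by (simp add: rank_eq[OF perm])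
qed

end

section \<open>Decreasing shapes and their corners\<close>

lemma antimono_on_SucI:
  fixes f :: "nat \<Rightarrow> 'a::preorder"
  assumes "\<And>i. a \<le> i \<Longrightarrow> i < b \<Longrightarrow> f (Suc i) \<le> f i"
  shows "antimono_on {a..b} f"
proof (rule monotone_onI)
  fix x y assume xy: "x \<in> {a..b}" "y \<in> {a..b}" "x \<le> y"
  from \<open>x \<le> y\<close> show "f y \<le> f x"
  proof (induction rule: dec_induct)
    case (step k)
    have "f (Suc k) \<le> f k" using assms[of k] step.hyps xy by simp
    then show ?case using step.IH order.trans by blast
  qed simp
qed

definition corners :: "nat \<Rightarrow> (nat \<Rightarrow> nat) \<Rightarrow> nat set" where
  "corners n f = {i \<in> {1..<n}. f (Suc i) < f i}"

definition corner_cells :: "nat \<Rightarrow> (nat \<Rightarrow> nat) \<Rightarrow> (nat \<times> nat) set" where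
  "corner_cells n f = (\<lambda>i. (i, f i)) ` corners n f"

lemma corner_at_or_after:
  assumes f: "antimono_on {1..n} f" "f n = 0" and i: "i \<in> {1..n}" "0 < f i"
  shows "\<exists>r\<in>corners n f. i \<le> r \<and> f r = f i"
  using i
proof (induction "n - i" arbitrary: i)
  case 0
  then show ?case using f(2) by simp
next
  case (Suc k)
  then have "i < n" by simp
  show ?case
  proof (cases "f (Suc i) < f i")
    case True
    then have "i \<in> corners n f" using Suc.prems \<open>i < n\<close> by (simp add: corners_def)
    then show ?thesis by blast
  next
    case False
    then have eq: "f (Suc i) = f i"
      using monotone_onD[OF f(1), of i "Suc i"] Suc.prems \<open>i < n\<close> by simp
    have "\<exists>r\<in>corners n f. Suc i \<le> r \<and> f r = f (Suc i)"
      using Suc.hyps(1)[of "Suc i"] Suc.hyps(2) Suc.prems \<open>i < n\<close> eq by simp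
    then show ?thesis using eq Suc_leD by metis
  qed
qed

lemma corner_cells_inj:
  assumes "antimono_on {1..n} f" "antimono_on {1..n} g" "f n = 0" "g n = 0"
    and eq: "corner_cells n f = corner_cells n g" and i: "i \<in> {1..n}"
  shows "f i = g i"
proof -
  have "f i \<le> g i"
    if f: "antimono_on {1..n} f" "f n = 0" and g: "antimono_on {1..n} g"
      and eq: "corner_cells n f = corner_cells n g" for f g
  proof (cases "f i = 0")
    case False
    then obtain r where r: "r \<in> corners n f" "i \<le> r" "f r = f i"
      using corner_at_or_after[OF f i] by auto
    have "(r, f r) \<in> corner_cells n f" using r(1) by (simp add: corner_cells_def)
    then have "(r, f r) \<in> corner_cells n g" using eq by simp
    then have "g r = f r" "r \<in> {1..n}" by (auto simp: corner_cells_def corners_def)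
    then show ?thesis using monotone_onD[OF g(1) i(1) \<open>r \<in> {1..n}\<close> r(2)] r(3) by simp
  qed simp
  then show ?thesis using assms by (metis order.antisym)
qed

lemma corner_cells_cong:
  assumes "\<And>i. i \<in> {1..n} \<Longrightarrow> f i = g i"
  shows "corner_cells n f = corner_cells n g"
proof -
  have "f (Suc i) < f i \<longleftrightarrow> g (Suc i) < g i" if "i \<in> {1..<n}" for i
    using assms[of i] assms[of "Suc i"] that by simp
  then have corners: "corners n f = corners n g"
    unfolding corners_def by blast
  show ?thesis
    unfolding corner_cells_def corners using assms by (intro image_cong) (auto simp: corners_def)
qed

section \<open>Dominant permutations\<close>

definition dominant :: "nat \<Rightarrow> (nat \<Rightarrow> nat) \<Rightarrow> bool" where
  "dominant n \<pi> \<longleftrightarrow> (\<forall>i j. (i, j) \<in> diagram n \<pi> \<longrightarrow> rank \<pi> (i, j) = 0)"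

context
  fixes n :: nat and \<pi> :: "nat \<Rightarrow> nat"
  assumes perm: "\<pi> permutes {1..n}"
begin

lemma lehmer_less_prefix_min_if_dominant:
  assumes dom: "dominant n \<pi>" and i: "i \<in> {1..n}"
  shows "lehmer \<pi> i < prefix_min n \<pi> i"
proof (rule ccontr)
  assume "\<not> lehmer \<pi> i < prefix_min n \<pi> i"
  then have cell: "(i, Suc (lehmer \<pi> i)) \<in> diagram n \<pi>"
    using diagram_row_if_rank_le_1[OF perm i] dom by (simp add: dominant_def row_end_def)
  moreover have "Suc (lehmer \<pi> i) \<le> Suc n"
    using lehmer_le[OF perm i] i by simp
  ultimately have "0 < rank \<pi> (i, Suc (lehmer \<pi> i))"
    using rank_pos_if_gt_prefix_min[OF perm] \<open>\<not> lehmer \<pi> i < prefix_min n \<pi> i\<close> by simp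
  then show False using dom cell by (simp add: dominant_def)
qed

lemma dominant_diagram_iff:
  assumes dom: "dominant n \<pi>" and i: "i \<in> {1..n}"
  shows "(i, j) \<in> diagram n \<pi> \<longleftrightarrow> 1 \<le> j \<and> j \<le> lehmer \<pi> i"
proof -
  have rank: "\<And>j. (i, j) \<in> diagram n \<pi> \<Longrightarrow> rank \<pi> (i, j) \<le> 1"
    using dom by (simp add: dominant_def)
  have "lehmer \<pi> i < prefix_min n \<pi> i"
    by (rule lehmer_less_prefix_min_if_dominant[OF dom i])
  then show ?thesis
    using diagram_row_if_rank_le_1[OF perm i rank, of j] by (auto simp: row_end_def)
qed

lemma dominant_lehmer_antimono:
  assumes dom: "dominant n \<pi>"
  shows "antimono_on {1..n} (lehmer \<pi>)"
proof (rule antimono_on_SucI)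
  fix i assume i: "1 \<le> i" "i < n"
  let ?c = "lehmer \<pi> (Suc i)"
  show "?c \<le> lehmer \<pi> i"
  proof (cases "?c = 0")
    case False
    then have cell: "(Suc i, ?c) \<in> diagram n \<pi>"
      using dominant_diagram_iff[OF dom, of "Suc i"] i by simp
    then have c: "?c < \<pi> (Suc i)" "?c \<notin> values_before \<pi> (Suc i)"
      using diagram_iff[OF perm] by auto
    have "\<not> \<pi> i < ?c"
    proof
      assume "\<pi> i < ?c"
      then have "\<pi> i \<in> {p \<in> values_before \<pi> (Suc i). p < ?c}"
        using values_before_Suc[OF i(1)] by simp
      then have "{p \<in> values_before \<pi> (Suc i). p < ?c} \<noteq> {}" by blast
      then have "rank \<pi> (Suc i, ?c) \<noteq> 0"
        unfolding rank_eq[OF perm] by simp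
      then show False using dom cell by (simp add: dominant_def)
    qed
    moreover have "\<pi> i \<noteq> ?c" using c(2) values_before_Suc[OF i(1)] by auto
    ultimately have "(i, ?c) \<in> diagram n \<pi>"
      using diagram_iff[OF perm] c(2) values_before_Suc[OF i(1)] i False by simp
    then show ?thesis using dominant_diagram_iff[OF dom, of i] i by simp
  qed simp
qed

lemma values_before_disjoint_if_lehmer_antimono:
  assumes anti: "antimono_on {1..n} (lehmer \<pi>)" and i: "i \<in> {1..n}"
  shows "values_before \<pi> i \<inter> {1..lehmer \<pi> i} = {}"
  using i
proof (induction i)
  case (Suc i)
  show ?case
  proof (cases "i = 0")
    case False
    then have "values_before \<pi> i \<inter> {1..lehmer \<pi> i} = {}" using Suc by simp
    moreover have "lehmer \<pi> (Suc i) \<le> lehmer \<pi> i"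
      using monotone_onD[OF anti, of i "Suc i"] False Suc.prems by simp
    moreover have "lehmer \<pi> i < \<pi> i" using lehmer_less[OF perm, of i] False Suc.prems by simp
    ultimately show ?thesis using values_before_Suc[of i \<pi>] False by auto
  qed simp
qed simp

lemma dominant_if_lehmer_antimono:
  assumes anti: "antimono_on {1..n} (lehmer \<pi>)"
  shows "dominant n \<pi>"
  unfolding dominant_def
proof (intro allI impI)
  fix i j assume cell: "(i, j) \<in> diagram n \<pi>"
  then have i: "i \<in> {1..n}" using diagram_iff[OF perm] by simp
  define R where "R = {j. 1 \<le> j \<and> j < \<pi> i \<and> j \<notin> values_before \<pi> i}"
  have disj: "values_before \<pi> i \<inter> {1..lehmer \<pi> i} = {}"
    by (rule values_before_disjoint_if_lehmer_antimono[OF anti i])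
  have "{1..lehmer \<pi> i} \<subseteq> R"
    using disj lehmer_less[OF perm i] by (auto simp: R_def)
  moreover have "finite R" "card R = lehmer \<pi> i" by (simp_all add: R_def lehmer_def)
  ultimately have "R = {1..lehmer \<pi> i}"
    by (metis card_atLeastAtMost card_subset_eq diff_Suc_1)
  then have "j \<le> lehmer \<pi> i" using cell diagram_iff[OF perm] by (simp add: R_def set_eq_iff)
  then have "{p \<in> values_before \<pi> i. p < j} = {}"
    using disj values_before_pos[OF perm] by fastforce
  then show "rank \<pi> (i, j) = 0" by (simp add: rank_eq[OF perm])
qed

lemma ess_dominant:
  assumes dom: "dominant n \<pi>"
  shows "ess n \<pi> = corner_cells n (lehmer \<pi>)"
proof -
  have D: "(i, j) \<in> diagram n \<pi> \<longleftrightarrow> i \<in> {1..n} \<and> 1 \<le> j \<and> j \<le> lehmer \<pi> i" for i j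
    using dominant_diagram_iff[OF dom] diagram_iff[OF perm] by blast
  show ?thesis
  proof (intro set_eqI iffI)
    fix e assume "e \<in> ess n \<pi>"
    then obtain i j where e: "e = (i, j)" "(i, j) \<in> diagram n \<pi>" "(Suc i, j) \<notin> diagram n \<pi>"
      "(i, Suc j) \<notin> diagram n \<pi>" by (auto simp: ess_def)
    then have "i \<noteq> n" using lehmer_last[OF perm] D by fastforce
    then show "e \<in> corner_cells n (lehmer \<pi>)"
      using e D by (force simp: corner_cells_def corners_def)
  next
    fix e assume "e \<in> corner_cells n (lehmer \<pi>)"
    then show "e \<in> ess n \<pi>"
      using D by (auto simp: corner_cells_def corners_def ess_def)
  qed
qed

lemma ess_above:
  assumes "(i, j) \<in> diagram n \<pi>"
  shows "\<exists>a b. (a, b) \<in> ess n \<pi> \<and> i \<le> a \<and> j \<le> b"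
proof -
  define S where "S = {(a, b) \<in> diagram n \<pi>. i \<le> a \<and> j \<le> b}"
  have "(i, j) \<in> S" using assms by (simp add: S_def)
  moreover have "\<forall>e. e \<in> S \<longrightarrow> fst e + snd e < Suc (2 * n)"
    by (auto simp: S_def diagram_def)
  ultimately obtain e where e: "e \<in> S" and max: "\<And>e'. e' \<in> S \<Longrightarrow> fst e' + snd e' \<le> fst e + snd e"
    using ex_has_greatest_nat[of "\<lambda>e. e \<in> S" "(i, j)" "\<lambda>e. fst e + snd e"] by blast
  obtain a b where ab: "e = (a, b)" by fastforce
  have "(Suc a, b) \<notin> S" "(a, Suc b) \<notin> S" using max[of "(Suc a, b)"] max[of "(a, Suc b)"] ab by auto
  then have "(a, b) \<in> ess n \<pi>" using e ab by (simp add: S_def ess_def)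
  then show ?thesis using e ab by (auto simp: S_def)
qed

lemma dominant_if_ess_rank_0:
  assumes "\<forall>e\<in>ess n \<pi>. rank \<pi> e = 0"
  shows "dominant n \<pi>"
  unfolding dominant_def
proof (intro allI impI)
  fix i j assume "(i, j) \<in> diagram n \<pi>"
  then obtain a b where ab: "(a, b) \<in> ess n \<pi>" "i \<le> a" "j \<le> b" using ess_above by blast
  then have "rank \<pi> (i, j) \<le> rank \<pi> (a, b)" by (intro rank_mono)
  then show "rank \<pi> (i, j) = 0" using assms ab(1) by simp
qed

end

section \<open>Schroeder permutations and the map \<open>phi\<close>\<close>

text \<open>
  Row \<open>i\<close> of the diagram after the shift defining \<^const>\<open>ess_star\<close>: the rank-0 cells of
  row \<open>i\<close> fill \<open>1, \<dots>, prefix_min n \<pi> (Suc i) - 1\<close>, and the rank-1 cells of row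
  \<open>Suc i\<close>, moved one step up and left, end at \<open>lehmer \<pi> (Suc i)\<close>.
\<close>

definition phi_code :: "nat \<Rightarrow> (nat \<Rightarrow> nat) \<Rightarrow> nat \<Rightarrow> nat" where
  "phi_code n \<pi> i = max (prefix_min n \<pi> (Suc i) - 1) (lehmer \<pi> (Suc i))"

context
  fixes n :: nat and \<pi> :: "nat \<Rightarrow> nat"
  assumes perm: "\<pi> permutes {1..n}"
begin

lemma phi_code_last: "phi_code n \<pi> n = 0"
  by (simp add: phi_code_def prefix_min_last[OF perm] lehmer_Suc_last[OF perm])

lemma phi_code_le:
  assumes i: "i \<in> {1..n}"
  shows "phi_code n \<pi> i \<le> n - i"
proof -
  have "lehmer \<pi> (Suc i) \<le> n - i"
    using lehmer_le[OF perm, of "Suc i"] lehmer_Suc_last[OF perm] i by (cases "i = n") auto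
  moreover have "prefix_min n \<pi> (Suc i) - 1 \<le> n - i"
  proof -
    let ?A = "prefix_min n \<pi> (Suc i)"
    have "values_before \<pi> (Suc i) \<subseteq> {?A..n}"
      using prefix_min_le values_before_subset[OF perm, of "Suc i"] i by fastforce
    then have "card (values_before \<pi> (Suc i)) \<le> Suc n - ?A"
      by (metis card_atLeastAtMost card_mono finite_atLeastAtMost)
    then show ?thesis
      using card_values_before[OF perm, of "Suc i"] prefix_min_le_Suc[of n \<pi> "Suc i"] by simp
  qed
  ultimately show ?thesis by (simp add: phi_code_def)
qed

end

context
  fixes n :: nat and \<pi> :: "nat \<Rightarrow> nat"
  assumes perm: "\<pi> permutes {1..n}" and S: "schroeder n \<pi>"
begin

lemma schroeder_diagram_iff:
  "(i, j) \<in> diagram n \<pi> \<longleftrightarrow>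
     i \<in> {1..n} \<and> 1 \<le> j \<and> j \<le> row_end n \<pi> i \<and> j \<noteq> prefix_min n \<pi> i"
proof (cases "i \<in> {1..n}")
  case True
  then show ?thesis
    using diagram_row_if_rank_le_1[OF perm True] rank_le_1_if_schroeder[OF perm S] by simp
qed (auto simp: diagram_iff[OF perm])

lemma schroeder_rank_eq_1:
  assumes cell: "(i, j) \<in> diagram n \<pi>" and gt: "prefix_min n \<pi> i < j"
  shows "rank \<pi> (i, j) = 1"
proof -
  have "j \<le> Suc n" using cell by (simp add: diagram_def)
  then show ?thesis
    using rank_pos_if_gt_prefix_min[OF perm gt] rank_le_1_if_schroeder[OF perm S cell] by simp
qed

lemma lehmer_Suc_less_if_ltr_min:
  assumes k: "k \<in> {1..n}" and ltr: "lehmer \<pi> k < prefix_min n \<pi> k - 1"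
  shows "lehmer \<pi> (Suc k) < prefix_min n \<pi> k - 1"
proof (cases "k = n \<or> k = 1")
  case True
  then show ?thesis
    using ltr lehmer_Suc_last[OF perm] lehmer_le[OF perm, of "Suc k"] k by (cases "k = n") auto
next
  case False
  let ?A = "prefix_min n \<pi> k"
  have k2: "2 \<le> k" "Suc k \<in> {1..n}" using k False by auto
  have rec: "\<pi> k = Suc (lehmer \<pi> k)" "prefix_min n \<pi> (Suc k) = \<pi> k"
    using ltr_min_if_lehmer_less[OF perm k ltr] by auto
  have A: "?A \<in> values_before \<pi> (Suc k)"
    using prefix_min_in[OF perm k2(1)] values_before_Suc[of k \<pi>] k by simp
  show ?thesis
  proof (rule ccontr)
    assume "\<not> ?thesis"
    then have "?A \<le> row_end n \<pi> (Suc k)"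
      using rec ltr by (simp add: row_end_def)
    moreover have "?A \<noteq> prefix_min n \<pi> (Suc k)" "1 \<le> ?A"
      using rec ltr by auto
    ultimately have "(Suc k, ?A) \<in> diagram n \<pi>"
      using schroeder_diagram_iff k2(2) by simp
    then show False
      using A by (simp add: diagram_iff[OF perm])
  qed
qed

lemma lehmer_Suc_le_max:
  assumes k: "k \<in> {1..n}"
  shows "lehmer \<pi> (Suc k) \<le> max (prefix_min n \<pi> k - 1) (lehmer \<pi> k)"
proof (cases "lehmer \<pi> k < prefix_min n \<pi> k - 1")
  case True
  then show ?thesis using lehmer_Suc_less_if_ltr_min[OF k] by simp
next
  case False
  let ?A = "prefix_min n \<pi> k"
  have A: "?A < \<pi> k" "prefix_min n \<pi> (Suc k) = ?A"
    using not_ltr_min_if_lehmer_ge[OF perm k] False by auto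
  show ?thesis
  proof (rule ccontr)
    assume "\<not> ?thesis"
    then have big: "lehmer \<pi> k < lehmer \<pi> (Suc k)" "?A \<le> lehmer \<pi> (Suc k)" by auto
    have "k \<noteq> n" using big(1) lehmer_Suc_last[OF perm] by auto
    then have k': "Suc k \<in> {1..n}" using k by simp
    have row: "(Suc k, j) \<in> diagram n \<pi> \<longleftrightarrow> 1 \<le> j \<and> j \<le> Suc (lehmer \<pi> (Suc k)) \<and> j \<noteq> ?A" for j
      using schroeder_diagram_iff A(2) big(2) k' by (simp add: row_end_def)
    have "\<pi> k \<in> values_before \<pi> (Suc k)" using values_before_Suc[of k \<pi>] k by simp
    then have "(Suc k, \<pi> k) \<notin> diagram n \<pi>" by (simp add: diagram_iff[OF perm])
    then have "Suc (lehmer \<pi> (Suc k)) < \<pi> k" using row[of "\<pi> k"] A(1) by auto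
    then have "{j. (Suc k, j) \<in> diagram n \<pi>} \<subseteq> {j. (k, j) \<in> diagram n \<pi>}"
      using row diagram_Suc_row[OF perm] k by fastforce
    then have "card {j. (Suc k, j) \<in> diagram n \<pi>} \<le> card {j. (k, j) \<in> diagram n \<pi>}"
      by (rule card_mono[rotated]) (rule finite_subset[of _ "{1..n}"], auto simp: diagram_def)
    then have "lehmer \<pi> (Suc k) \<le> lehmer \<pi> k"
      using card_diagram_row[OF perm] k k' by simp
    then show False using big by simp
  qed
qed

lemma phi_code_antimono: "antimono_on {1..n} (phi_code n \<pi>)"
proof (rule antimono_on_SucI)
  fix i assume i: "1 \<le> i" "i < n"
  then have k: "Suc i \<in> {1..n}" by simp
  have "prefix_min n \<pi> (Suc (Suc i)) \<le> prefix_min n \<pi> (Suc i)"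
    by (simp add: prefix_min_Suc)
  then show "phi_code n \<pi> (Suc i) \<le> phi_code n \<pi> i"
    using lehmer_Suc_le_max[OF k] by (auto simp: phi_code_def)
qed

lemma phi_code_at_ltr_min:
  assumes k: "Suc i \<in> {1..n}" and less: "lehmer \<pi> (Suc i) < prefix_min n \<pi> (Suc i) - 1"
  shows "phi_code n \<pi> i = prefix_min n \<pi> (Suc i) - 1" "phi_code n \<pi> (Suc i) < phi_code n \<pi> i"
proof -
  show eq: "phi_code n \<pi> i = prefix_min n \<pi> (Suc i) - 1"
    using less by (simp add: phi_code_def)
  have "prefix_min n \<pi> (Suc (Suc i)) - 1 = lehmer \<pi> (Suc i)"
    using prefix_min_Suc_eq_min_lehmer[OF perm k] less by simp
  then show "phi_code n \<pi> (Suc i) < phi_code n \<pi> i"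
    using lehmer_Suc_less_if_ltr_min[OF k less] less eq by (simp add: phi_code_def)
qed

lemma ess_schroeder_iff:
  "(i, j) \<in> ess n \<pi> \<longleftrightarrow>
     (i \<in> {1..n} \<and> 1 \<le> j \<and> j \<le> row_end n \<pi> i \<and> j \<noteq> prefix_min n \<pi> i) \<and>
     \<not> (Suc j \<le> row_end n \<pi> i \<and> Suc j \<noteq> prefix_min n \<pi> i) \<and>
     \<not> (Suc i \<le> n \<and> j \<le> row_end n \<pi> (Suc i) \<and> j \<noteq> prefix_min n \<pi> (Suc i))"
  unfolding ess_def using schroeder_diagram_iff by auto

lemma ess_rank_ne_1_in_corner_cells:
  assumes e: "(i, j) \<in> ess n \<pi>" and r: "rank \<pi> (i, j) \<noteq> 1"
  shows "(i, j) \<in> corner_cells n (phi_code n \<pi>)"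
proof -
  let ?A = "prefix_min n \<pi> i"
  have cell: "i \<in> {1..n}" "1 \<le> j" "j \<le> row_end n \<pi> i" "j \<noteq> ?A"
    and right: "\<not> (Suc j \<le> row_end n \<pi> i \<and> Suc j \<noteq> ?A)"
    and below: "\<not> (Suc i \<le> n \<and> j \<le> row_end n \<pi> (Suc i) \<and> j \<noteq> prefix_min n \<pi> (Suc i))"
    using e ess_schroeder_iff by blast+
  have "j < ?A"
    using schroeder_rank_eq_1 e r cell(4) by (force simp: ess_def)
  moreover have "prefix_min n \<pi> (Suc i) - 1 = min (?A - 1) (lehmer \<pi> i)"
    by (rule prefix_min_Suc_eq_min_lehmer[OF perm cell(1)])
  ultimately have j: "j = prefix_min n \<pi> (Suc i) - 1"
    using cell(3) right by (auto simp: row_end_def split: if_splits)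
  then have "i \<noteq> n" using cell(2) prefix_min_last[OF perm] by auto
  then have k: "Suc i \<in> {1..n}" using cell(1) by simp
  have "lehmer \<pi> (Suc i) < prefix_min n \<pi> (Suc i) - 1"
    using below k j prefix_min_pos[OF perm, of "Suc i"] by (auto simp: row_end_def split: if_splits)
  then show ?thesis
    using phi_code_at_ltr_min[OF k] j cell(1) \<open>i \<noteq> n\<close>
    by (auto simp: corner_cells_def corners_def image_iff)
qed

lemma ess_rank_1_shifted_in_corner_cells:
  assumes e: "(i, j) \<in> ess n \<pi>" and r: "rank \<pi> (i, j) = 1"
  shows "(i - 1, j - 1) \<in> corner_cells n (phi_code n \<pi>)"
proof -
  let ?A = "prefix_min n \<pi> i" and ?c = "lehmer \<pi> i"
  have cell: "i \<in> {1..n}" "1 \<le> j" "j \<le> row_end n \<pi> i" "j \<noteq> ?A"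
    and right: "\<not> (Suc j \<le> row_end n \<pi> i \<and> Suc j \<noteq> ?A)"
    and below: "\<not> (Suc i \<le> n \<and> j \<le> row_end n \<pi> (Suc i) \<and> j \<noteq> prefix_min n \<pi> (Suc i))"
    using e ess_schroeder_iff by blast+
  have "?A < j"
    using rank_eq_0_if_le_prefix_min[OF perm, of j i] r by fastforce
  then have Ac: "?A \<le> ?c" and j: "j = Suc ?c"
    using cell(3) right by (auto simp: row_end_def split: if_splits)
  have "i \<noteq> 1" using Ac lehmer_le[OF perm cell(1)] by auto
  then obtain i0 where i0: "i = Suc i0" "1 \<le> i0" using cell(1) by (cases i) auto
  have "i \<noteq> n" using Ac lehmer_last[OF perm] prefix_min_pos[OF perm, of i] by auto
  then have k: "Suc i \<in> {1..n}" using cell(1) by simp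
  have A: "prefix_min n \<pi> (Suc i) = ?A"
    using not_ltr_min_if_lehmer_ge[OF perm cell(1)] Ac by simp
  have "lehmer \<pi> (Suc i) < ?c"
    using below k j A \<open>?A < j\<close> Ac by (auto simp: row_end_def split: if_splits)
  then have "phi_code n \<pi> i0 = ?c" "phi_code n \<pi> (Suc i0) < ?c"
    using i0 Ac A by (auto simp: phi_code_def)
  then show ?thesis
    using i0 j \<open>i \<noteq> n\<close> cell(1) by (auto simp: corner_cells_def corners_def image_iff)
qed

lemma corner_cell_in_ess_star_if_ltr_min:
  assumes i: "i \<in> {1..<n}" and drop: "phi_code n \<pi> (Suc i) < phi_code n \<pi> i"
    and ltr: "lehmer \<pi> (Suc i) < prefix_min n \<pi> (Suc i) - 1"
  shows "(i, phi_code n \<pi> i) \<in> ess_star n \<pi>"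
proof -
  let ?M = "prefix_min n \<pi> (Suc i) - 1"
  have i': "i \<in> {1..n}" using i by simp
  have M: "?M = min (prefix_min n \<pi> i - 1) (lehmer \<pi> i)"
    by (rule prefix_min_Suc_eq_min_lehmer[OF perm i'])
  have lam: "phi_code n \<pi> i = ?M" using ltr by (simp add: phi_code_def)
  then have "1 \<le> ?M" using drop by simp
  then have "(i, ?M) \<in> ess n \<pi>"
    using M ltr i' prefix_min_pos[OF perm, of i] unfolding ess_schroeder_iff
    by (auto simp: row_end_def min_def split: if_splits)
  moreover have "rank \<pi> (i, ?M) = 0"
    using M by (intro rank_eq_0_if_le_prefix_min[OF perm, of ?M i]) simp
  ultimately show ?thesis
    using lam by (simp add: ess_star_def)
qed

lemma corner_cell_in_ess_star_if_not_ltr_min: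
  assumes i: "i \<in> {1..<n}" and drop: "phi_code n \<pi> (Suc i) < phi_code n \<pi> i"
    and not_ltr: "prefix_min n \<pi> (Suc i) - 1 < lehmer \<pi> (Suc i)"
  shows "(i, phi_code n \<pi> i) \<in> ess_star n \<pi>"
proof -
  let ?c = "lehmer \<pi> (Suc i)"
  have k: "Suc i \<in> {1..n}" using i by simp
  have A: "prefix_min n \<pi> (Suc (Suc i)) = prefix_min n \<pi> (Suc i)"
    using not_ltr_min_if_lehmer_ge[OF perm k] not_ltr by simp
  have lam: "phi_code n \<pi> i = ?c" using not_ltr by (simp add: phi_code_def)
  have "(Suc i, Suc ?c) \<in> ess n \<pi>"
  proof (cases "Suc i = n")
    case False
    then have "lehmer \<pi> (Suc (Suc i)) < ?c"
      using drop lam A by (simp add: phi_code_def)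
    then show ?thesis
      using not_ltr k unfolding ess_schroeder_iff by (auto simp: row_end_def)
  qed (use not_ltr k in \<open>auto simp: ess_schroeder_iff row_end_def\<close>)
  moreover have "rank \<pi> (Suc i, Suc ?c) = 1"
    using schroeder_rank_eq_1 calculation not_ltr by (simp add: ess_def)
  ultimately have "(\<lambda>(i, j). (i - 1, j - 1)) (Suc i, Suc ?c) \<in> ess_star n \<pi>"
    unfolding ess_star_def by blast
  then show ?thesis using lam by simp
qed

lemma corner_cell_in_ess_star:
  assumes "i \<in> corners n (phi_code n \<pi>)"
  shows "(i, phi_code n \<pi> i) \<in> ess_star n \<pi>"
proof -
  have i: "i \<in> {1..<n}" and drop: "phi_code n \<pi> (Suc i) < phi_code n \<pi> i"
    using assms by (auto simp: corners_def)
  have "lehmer \<pi> (Suc i) \<noteq> prefix_min n \<pi> (Suc i) - 1"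
  proof
    assume eq: "lehmer \<pi> (Suc i) = prefix_min n \<pi> (Suc i) - 1"
    then have "phi_code n \<pi> i \<le> phi_code n \<pi> (Suc i)"
      using prefix_min_Suc_eq_min_lehmer[OF perm, of "Suc i"] i by (simp add: phi_code_def)
    then show False using drop by simp
  qed
  then show ?thesis
    using corner_cell_in_ess_star_if_ltr_min[OF i drop] corner_cell_in_ess_star_if_not_ltr_min[OF i drop]
    by linarith
qed

lemma ess_star_eq_corner_cells: "ess_star n \<pi> = corner_cells n (phi_code n \<pi>)"
proof
  show "ess_star n \<pi> \<subseteq> corner_cells n (phi_code n \<pi>)"
    using ess_rank_ne_1_in_corner_cells ess_rank_1_shifted_in_corner_cells by (force simp: ess_star_def)
  show "corner_cells n (phi_code n \<pi>) \<subseteq> ess_star n \<pi>"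
    using corner_cell_in_ess_star by (auto simp: corner_cells_def)
qed

end

lemma phi_eq_if_lehmer_eq_phi_code:
  assumes \<pi>: "\<pi> permutes {1..n}" "schroeder n \<pi>" and \<tau>: "\<tau> permutes {1..n}"
    and code: "\<And>i. i \<in> {1..n} \<Longrightarrow> lehmer \<tau> i = phi_code n \<pi> i"
  shows "phi n \<pi> = \<tau>"
proof -
  have "antimono_on {1..n} (lehmer \<tau>)"
    using monotone_onD[OF phi_code_antimono[OF \<pi>]] code by (intro monotone_onI) simp
  then have dom: "dominant n \<tau>" by (rule dominant_if_lehmer_antimono[OF \<tau>])
  have ess: "ess n \<tau> = ess_star n \<pi>"
    using ess_dominant[OF \<tau> dom] corner_cells_cong[of n "lehmer \<tau>" "phi_code n \<pi>"] code
      ess_star_eq_corner_cells[OF \<pi>] by simp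
  show ?thesis
    unfolding phi_def
  proof (rule the_equality)
    have "\<forall>e\<in>ess n \<tau>. rank \<tau> e = 0"
      using dom by (auto simp: dominant_def ess_def)
    then show "\<tau> permutes {1..n} \<and> ess n \<tau> = ess_star n \<pi> \<and> (\<forall>e\<in>ess n \<tau>. rank \<tau> e = 0)"
      using \<tau> ess by simp
  next
    fix \<sigma> assume \<sigma>: "\<sigma> permutes {1..n} \<and> ess n \<sigma> = ess_star n \<pi> \<and> (\<forall>e\<in>ess n \<sigma>. rank \<sigma> e = 0)"
    then have dom_\<sigma>: "dominant n \<sigma>" using dominant_if_ess_rank_0 by blast
    have "corner_cells n (lehmer \<sigma>) = corner_cells n (phi_code n \<pi>)"
      using ess_dominant[OF _ dom_\<sigma>] \<sigma> ess_star_eq_corner_cells[OF \<pi>] by simp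
    then have "lehmer \<sigma> i = phi_code n \<pi> i" if "i \<in> {1..n}" for i
      using corner_cells_inj[OF dominant_lehmer_antimono[OF _ dom_\<sigma>] phi_code_antimono[OF \<pi>]
          lehmer_last phi_code_last[OF \<pi>(1)]] that \<sigma> by blast
    then show "\<sigma> = \<tau>"
      using lehmer_inj[of \<sigma> n \<tau>] \<sigma> \<tau> code by simp
  qed
qed

lemma phi_eq_iff_lehmer_eq_phi_code:
  assumes \<pi>: "\<pi> permutes {1..n}" "schroeder n \<pi>" and \<sigma>: "\<sigma> permutes {1..n}"
  shows "phi n \<pi> = \<sigma> \<longleftrightarrow> (\<forall>i\<in>{1..n}. phi_code n \<pi> i = lehmer \<sigma> i)"
proof
  obtain \<tau> where \<tau>: "\<tau> permutes {1..n}" "\<And>i. i \<in> {1..n} \<Longrightarrow> lehmer \<tau> i = phi_code n \<pi> i"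
    using lehmer_surj[of n "phi_code n \<pi>"] phi_code_le[OF \<pi>(1)] by blast
  assume "phi n \<pi> = \<sigma>"
  then show "\<forall>i\<in>{1..n}. phi_code n \<pi> i = lehmer \<sigma> i"
    using phi_eq_if_lehmer_eq_phi_code[OF \<pi> \<tau>] \<tau>(2) by simp
qed (use phi_eq_if_lehmer_eq_phi_code[OF \<pi> \<sigma>] in force)

section \<open>The fibres of \<open>phi\<close>\<close>

text \<open>Position \<open>i\<close> is marked iff \<open>\<pi> (Suc i)\<close> is a left-to-right minimum.\<close>

definition ltr_min_marks :: "nat \<Rightarrow> (nat \<Rightarrow> nat) \<Rightarrow> nat set" where
  "ltr_min_marks n \<pi> = {i \<in> {1..<n}. prefix_min n \<pi> (Suc (Suc i)) < prefix_min n \<pi> (Suc i)}"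

locale staircase_shape =
  fixes n :: nat and L :: "nat \<Rightarrow> nat"
  assumes shape_antimono: "antimono_on {1..n} L" and shape_last: "L n = 0"
    and shape_bounded: "\<And>i. i \<in> {1..n} \<Longrightarrow> L i \<le> n - i"
begin

definition boundary_corners :: "nat set" where
  "boundary_corners = {i \<in> corners n L. n \<le> i + L i}"

definition inner_corners :: "nat set" where
  "inner_corners = {i \<in> corners n L. i + L i < n}"

text \<open>
  If \<open>\<pi>\<close> lies in the fibre and has the marks \<open>E\<close>, then
  \<open>prefix_min n \<pi> (Suc k) - 1 = mark_level E k\<close> and \<open>lehmer \<pi> k = mark_code E k\<close>.
\<close>

definition next_mark :: "nat set \<Rightarrow> nat \<Rightarrow> nat" where
  "next_mark E k = (LEAST e. k \<le> e \<and> (e \<in> E \<or> e = n))"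

definition mark_level :: "nat set \<Rightarrow> nat \<Rightarrow> nat" where
  "mark_level E k = L (next_mark E k)"

definition mark_code :: "nat set \<Rightarrow> nat \<Rightarrow> nat" where
  "mark_code E k =
     (if k \<le> 1 then mark_level E 1
      else if mark_level E (k - 1) < L (k - 1) then L (k - 1) else mark_level E k)"

lemma L_antimono: "1 \<le> a \<Longrightarrow> a \<le> b \<Longrightarrow> b \<le> n \<Longrightarrow> L b \<le> L a"
  using monotone_onD[OF shape_antimono] by simp

lemma next_mark_bounds:
  assumes "k \<le> n"
  shows "k \<le> next_mark E k" "next_mark E k \<le> n" "next_mark E k \<in> E \<or> next_mark E k = n"
proof -
  have "k \<le> next_mark E k \<and> (next_mark E k \<in> E \<or> next_mark E k = n)"
    unfolding next_mark_def by (rule LeastI[of _ n]) (use assms in simp)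
  then show "k \<le> next_mark E k" "next_mark E k \<in> E \<or> next_mark E k = n" by auto
  show "next_mark E k \<le> n"
    unfolding next_mark_def by (rule Least_le) (use assms in simp)
qed

lemma next_mark_self: "k \<le> n \<Longrightarrow> k \<in> E \<or> k = n \<Longrightarrow> next_mark E k = k"
  unfolding next_mark_def by (rule Least_equality) auto

lemma next_mark_Suc:
  assumes "k < n" "k \<notin> E"
  shows "next_mark E k = next_mark E (Suc k)"
proof -
  have "(k \<le> e \<and> (e \<in> E \<or> e = n)) \<longleftrightarrow> (Suc k \<le> e \<and> (e \<in> E \<or> e = n))" for e
    using assms by (cases "e = k") auto
  then show ?thesis unfolding next_mark_def by simp
qed

lemma mark_level_le: "1 \<le> k \<Longrightarrow> k \<le> n \<Longrightarrow> mark_level E k \<le> L k"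
  unfolding mark_level_def using next_mark_bounds[of k E] by (intro L_antimono) auto

lemma mark_level_last: "mark_level E n = 0"
  unfolding mark_level_def using next_mark_self[of n E] shape_last by simp

lemma mark_level_mark: "k \<le> n \<Longrightarrow> k \<in> E \<Longrightarrow> mark_level E k = L k"
  unfolding mark_level_def using next_mark_self by simp

lemma mark_level_Suc: "k < n \<Longrightarrow> k \<notin> E \<Longrightarrow> mark_level E k = mark_level E (Suc k)"
  unfolding mark_level_def using next_mark_Suc by simp

lemma mark_code_Suc:
  "1 \<le> i \<Longrightarrow> mark_code E (Suc i) = (if mark_level E i < L i then L i else mark_level E (Suc i))"
  by (simp add: mark_code_def)

context
  fixes E :: "nat set"
  assumes marks: "E \<subseteq> corners n L" and boundary: "boundary_corners \<subseteq> E"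
begin

lemma mark_is_corner: "i \<in> E \<Longrightarrow> 1 \<le> i \<and> i < n \<and> L (Suc i) < L i"
  using marks by (auto simp: corners_def)

lemma mark_level_Suc_le: "1 \<le> k \<Longrightarrow> k < n \<Longrightarrow> mark_level E (Suc k) \<le> mark_level E k"
  using mark_level_le[of "Suc k" E] L_antimono[of k "Suc k"] mark_level_mark[of k E] mark_level_Suc[of k E]
  by (cases "k \<in> E") auto

lemma mark_level_drop_iff:
  assumes "1 \<le> k" "k < n"
  shows "mark_level E (Suc k) < mark_level E k \<longleftrightarrow> k \<in> E"
proof
  assume "k \<in> E"
  then show "mark_level E (Suc k) < mark_level E k"
    using mark_is_corner mark_level_le[of "Suc k" E] mark_level_mark[of k E] assms by fastforce
qed (use mark_level_Suc assms in fastforce)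

lemma mark_code_le:
  assumes k: "k \<in> {1..n}"
  shows "mark_code E k \<le> n - k"
proof (cases "k = 1")
  case True
  then show ?thesis
    using mark_level_le[of 1 E] shape_bounded[of 1] k by (simp add: mark_code_def)
next
  case False
  then obtain i where i: "k = Suc i" "1 \<le> i" using k by (cases k) auto
  show ?thesis
  proof (cases "mark_level E i < L i")
    case True
    then have "i \<notin> E" using mark_level_mark[of i E] i k by auto
    show ?thesis
    proof (cases "i \<in> corners n L")
      case True
      then have "i + L i < n" using \<open>i \<notin> E\<close> boundary by (auto simp: boundary_corners_def)
      then show ?thesis using mark_code_Suc[OF i(2)] \<open>mark_level E i < L i\<close> i by simp
    next
      case False
      then have "L (Suc i) = L i"
        using L_antimono[of i "Suc i"] i k by (simp add: corners_def)
      then show ?thesis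
        using mark_code_Suc[OF i(2)] \<open>mark_level E i < L i\<close> i k shape_bounded[of "Suc i"] by simp
    qed
  next
    case False
    then have "mark_code E k = mark_level E k" using mark_code_Suc[OF i(2)] i by simp
    then show ?thesis using mark_level_le[of k E] shape_bounded[of k] k by simp
  qed
qed

lemma L_eq_max_mark_code:
  assumes "1 \<le> i" "i < n"
  shows "L i = max (mark_level E i) (mark_code E (Suc i))"
  using mark_code_Suc[OF assms(1)] mark_level_le[of i E] mark_level_Suc_le[OF assms] assms
  by (auto simp: max_def)

end

context
  fixes E :: "nat set" and \<pi> :: "nat \<Rightarrow> nat"
  assumes marks: "E \<subseteq> corners n L" and boundary: "boundary_corners \<subseteq> E"
    and perm: "\<pi> permutes {1..n}" and code: "\<And>k. k \<in> {1..n} \<Longrightarrow> lehmer \<pi> k = mark_code E k"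
begin

lemma prefix_min_eq_mark_level: "k \<in> {1..n} \<Longrightarrow> prefix_min n \<pi> (Suc k) - 1 = mark_level E k"
proof (induction k)
  case (Suc k)
  have rec: "prefix_min n \<pi> (Suc (Suc k)) - 1 = min (prefix_min n \<pi> (Suc k) - 1) (lehmer \<pi> (Suc k))"
    using prefix_min_Suc_eq_min_lehmer[OF perm Suc.prems] .
  show ?case
  proof (cases "k = 0")
    case True
    then show ?thesis
      using rec code[of 1] mark_level_le[of 1 E] shape_bounded[of 1] Suc.prems
      by (simp add: mark_code_def)
  next
    case False
    then have k: "1 \<le> k" "k < n" using Suc.prems by auto
    have IH: "prefix_min n \<pi> (Suc k) - 1 = mark_level E k" using Suc.IH k by simp
    show ?thesis
    proof (cases "mark_level E k < L k")
      case True
      then have "k \<notin> E" using mark_level_mark[of k E] k by auto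
      then show ?thesis
        using rec IH code[OF Suc.prems] mark_code_Suc[OF k(1)] mark_level_Suc[OF k(2)] True by simp
    next
      case False
      then show ?thesis
        using rec IH code[OF Suc.prems] mark_code_Suc[OF k(1)] mark_level_Suc_le[OF marks boundary k]
        by simp
    qed
  qed
qed simp

lemma phi_code_eq_L:
  assumes i: "i \<in> {1..n}"
  shows "phi_code n \<pi> i = L i"
proof (cases "i = n")
  case True
  then show ?thesis using phi_code_last[OF perm] shape_last by simp
next
  case False
  then have "1 \<le> i" "i < n" using i by auto
  then show ?thesis
    using prefix_min_eq_mark_level[OF i] code[of "Suc i"] L_eq_max_mark_code[OF marks boundary]
    by (simp add: phi_code_def)
qed

lemma ltr_min_marks_eq: "ltr_min_marks n \<pi> = E"
proof (intro set_eqI iffI)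
  fix i assume "i \<in> ltr_min_marks n \<pi>"
  then have i: "1 \<le> i" "i < n" "prefix_min n \<pi> (Suc (Suc i)) < prefix_min n \<pi> (Suc i)"
    by (auto simp: ltr_min_marks_def)
  then have "mark_level E (Suc i) < mark_level E i"
    using prefix_min_eq_mark_level[of i] prefix_min_eq_mark_level[of "Suc i"]
      prefix_min_pos[OF perm, of "Suc (Suc i)"] by simp
  then show "i \<in> E" using mark_level_drop_iff[OF marks boundary i(1,2)] by simp
next
  fix i assume "i \<in> E"
  then have i: "1 \<le> i" "i < n" using mark_is_corner[OF marks boundary] by auto
  then have "mark_level E (Suc i) < mark_level E i"
    using mark_level_drop_iff[OF marks boundary i] \<open>i \<in> E\<close> by simp
  then show "i \<in> ltr_min_marks n \<pi>"
    using prefix_min_eq_mark_level[of i] prefix_min_eq_mark_level[of "Suc i"] i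
    by (simp add: ltr_min_marks_def)
qed

lemma large_value_if_not_ltr_min:
  assumes i: "1 \<le> i" "i < n" and not_ltr: "prefix_min n \<pi> (Suc i) - 1 \<le> lehmer \<pi> (Suc i)"
  shows "Suc (Suc (L i)) \<le> \<pi> (Suc i)"
proof -
  have k: "Suc i \<in> {1..n}" using i by simp
  have "L i \<le> lehmer \<pi> (Suc i)"
    using code[OF k] mark_code_Suc[OF i(1)] prefix_min_eq_mark_level[of i] not_ltr i
    by (auto split: if_splits)
  then show ?thesis
    using lehmer_at_non_ltr_min(2)[OF perm k] not_ltr_min_if_lehmer_ge(1)[OF perm k not_ltr] by simp
qed

lemma no_small_values_if_ltr_min:
  assumes i: "1 \<le> i" "i < n" and ltr: "lehmer \<pi> (Suc i) < prefix_min n \<pi> (Suc i) - 1"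
  shows "values_before \<pi> (Suc i) \<inter> {1..Suc (L (Suc i))} = {}"
proof -
  have k: "Suc i \<in> {1..n}" using i by simp
  have "mark_level E (Suc i) < mark_level E i"
    using ltr_min_if_lehmer_less[OF perm k ltr] ltr prefix_min_eq_mark_level[of i]
      prefix_min_eq_mark_level[OF k] i by simp
  then have "i \<in> E" using mark_level_drop_iff[OF marks boundary i] by simp
  then have "Suc (L (Suc i)) < prefix_min n \<pi> (Suc i)"
    using mark_is_corner[OF marks boundary] mark_level_mark[of i E] prefix_min_eq_mark_level[of i] i
    by fastforce
  then show ?thesis using prefix_min_le[of _ \<pi> "Suc i" n] by fastforce
qed

lemma few_small_values_before:
  "i \<in> {1..n} \<Longrightarrow> card (values_before \<pi> (Suc i) \<inter> {1..Suc (L i)}) \<le> 1"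
proof (induction i)
  case (Suc i)
  show ?case
  proof (cases "i = 0")
    case True
    then have "values_before \<pi> (Suc (Suc i)) = {\<pi> 1}" by (simp add: values_before_def)
    then show ?thesis by (simp add: card_le_Suc0_iff_eq)
  next
    case False
    then have i: "1 \<le> i" "i < n" using Suc.prems by auto
    have IH: "card (values_before \<pi> (Suc i) \<inter> {1..Suc (L i)}) \<le> 1" using Suc.IH i by simp
    have pre: "values_before \<pi> (Suc (Suc i)) = insert (\<pi> (Suc i)) (values_before \<pi> (Suc i))"
      by (simp add: values_before_Suc)
    show ?thesis
    proof (cases "lehmer \<pi> (Suc i) < prefix_min n \<pi> (Suc i) - 1")
      case True
      then have "values_before \<pi> (Suc (Suc i)) \<inter> {1..Suc (L (Suc i))} \<subseteq> {\<pi> (Suc i)}"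
        using no_small_values_if_ltr_min[OF i] pre by auto
      then have "card (values_before \<pi> (Suc (Suc i)) \<inter> {1..Suc (L (Suc i))}) \<le> card {\<pi> (Suc i)}"
        by (intro card_mono) simp_all
      then show ?thesis by simp
    next
      case False
      then have "Suc (Suc (L i)) \<le> \<pi> (Suc i)"
        using large_value_if_not_ltr_min[OF i] by simp
      moreover have "L (Suc i) \<le> L i" using L_antimono[of i "Suc i"] i by simp
      ultimately have "values_before \<pi> (Suc (Suc i)) \<inter> {1..Suc (L (Suc i))}
          \<subseteq> values_before \<pi> (Suc i) \<inter> {1..Suc (L i)}"
        using pre by auto
      then have "card (values_before \<pi> (Suc (Suc i)) \<inter> {1..Suc (L (Suc i))})
          \<le> card (values_before \<pi> (Suc i) \<inter> {1..Suc (L i)})"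
        by (intro card_mono) simp_all
      then show ?thesis using IH by linarith
    qed
  qed
qed simp

lemma schroeder_if_lehmer_eq_mark_code: "schroeder n \<pi>"
proof (rule schroeder_if_rank_le_1[OF perm])
  fix k j assume cell: "(k, j) \<in> diagram n \<pi>"
  then have k: "k \<in> {1..n}" by (simp add: diagram_iff[OF perm])
  show "rank \<pi> (k, j) \<le> 1"
  proof (cases "k = 1")
    case True
    then show ?thesis by (simp add: rank_eq[OF perm])
  next
    case False
    then obtain i where i: "k = Suc i" "1 \<le> i" using k by (cases k) auto
    have "lehmer \<pi> k \<le> L i"
      using code[OF k] mark_code_Suc[OF i(2)] mark_level_le[of k E] L_antimono[of i k] i k by auto
    moreover have "card (values_before \<pi> k \<inter> {1..Suc (L i)}) \<le> 1"
      using few_small_values_before[of i] i k by simp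
    ultimately show ?thesis
      using rank_le_1_if_few_small_values[OF perm k _ _ cell] by blast
  qed
qed

end

context
  fixes \<pi> :: "nat \<Rightarrow> nat"
  assumes perm: "\<pi> permutes {1..n}" and S: "schroeder n \<pi>"
    and shape: "\<And>i. i \<in> {1..n} \<Longrightarrow> phi_code n \<pi> i = L i"
begin

lemma lehmer_less_at_mark:
  assumes "i \<in> ltr_min_marks n \<pi>"
  shows "lehmer \<pi> (Suc i) < prefix_min n \<pi> (Suc i) - 1"
proof -
  have i: "1 \<le> i" "i < n" "prefix_min n \<pi> (Suc (Suc i)) < prefix_min n \<pi> (Suc i)"
    using assms by (auto simp: ltr_min_marks_def)
  then have k: "Suc i \<in> {1..n}" by simp
  show ?thesis
    using prefix_min_Suc_eq_min_lehmer[OF perm k] i(3) prefix_min_pos[OF perm, of "Suc (Suc i)"]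
    by linarith
qed

lemma ltr_min_marks_subset_corners: "ltr_min_marks n \<pi> \<subseteq> corners n L"
proof
  fix i assume mark: "i \<in> ltr_min_marks n \<pi>"
  then have i: "1 \<le> i" "i < n" by (auto simp: ltr_min_marks_def)
  then have "phi_code n \<pi> (Suc i) < phi_code n \<pi> i"
    using phi_code_at_ltr_min[OF perm S _ lehmer_less_at_mark[OF mark]] by simp
  then show "i \<in> corners n L" using shape[of i] shape[of "Suc i"] i by (simp add: corners_def)
qed

lemma boundary_subset_ltr_min_marks: "boundary_corners \<subseteq> ltr_min_marks n \<pi>"
proof
  fix i assume "i \<in> boundary_corners"
  then have i: "1 \<le> i" "i < n" "n \<le> i + L i" by (auto simp: boundary_corners_def corners_def)
  then have k: "Suc i \<in> {1..n}" by simp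
  show "i \<in> ltr_min_marks n \<pi>"
  proof (rule ccontr)
    assume "i \<notin> ltr_min_marks n \<pi>"
    then have "prefix_min n \<pi> (Suc i) \<le> prefix_min n \<pi> (Suc (Suc i))"
      using i by (simp add: ltr_min_marks_def)
    then have "prefix_min n \<pi> (Suc i) - 1 \<le> lehmer \<pi> (Suc i)"
      using prefix_min_Suc_eq_min_lehmer[OF perm k] prefix_min_Suc[of "Suc i" n \<pi>] by simp
    then have "L i = lehmer \<pi> (Suc i)"
      using shape[of i] i by (simp add: phi_code_def)
    then show False using lehmer_le[OF perm k] i by simp
  qed
qed

lemma prefix_min_eq_mark_level_of_marks:
  assumes "k \<in> {1..n}"
  shows "prefix_min n \<pi> (Suc k) - 1 = mark_level (ltr_min_marks n \<pi>) k"
  using assms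
proof (induction "n - k" arbitrary: k)
  case 0
  then have "k = n" by simp
  then show ?case using prefix_min_last[OF perm] mark_level_last by simp
next
  case (Suc m)
  then have k: "1 \<le> k" "k < n" by auto
  have IH: "prefix_min n \<pi> (Suc (Suc k)) - 1 = mark_level (ltr_min_marks n \<pi>) (Suc k)"
    using Suc.hyps k by simp
  show ?case
  proof (cases "k \<in> ltr_min_marks n \<pi>")
    case True
    then have "L k = prefix_min n \<pi> (Suc k) - 1"
      using lehmer_less_at_mark[OF True] shape[of k] k by (simp add: phi_code_def)
    then show ?thesis using mark_level_mark[of k] True k by simp
  next
    case False
    then have "prefix_min n \<pi> (Suc (Suc k)) = prefix_min n \<pi> (Suc k)"
      using k prefix_min_Suc[of "Suc k" n \<pi>] by (simp add: ltr_min_marks_def)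
    then show ?thesis using IH mark_level_Suc[of k] False k by simp
  qed
qed

lemma lehmer_eq_mark_code:
  assumes k: "k \<in> {1..n}"
  shows "lehmer \<pi> k = mark_code (ltr_min_marks n \<pi>) k"
proof (cases "k = 1")
  case True
  have "prefix_min n \<pi> (Suc 1) - 1 = lehmer \<pi> 1"
    using prefix_min_Suc_eq_min_lehmer[OF perm, of 1] lehmer_le[OF perm, of 1] k True by simp
  then show ?thesis
    using prefix_min_eq_mark_level_of_marks[of 1] k True by (simp add: mark_code_def)
next
  case False
  then obtain i where i: "k = Suc i" "1 \<le> i" using k by (cases k) auto
  let ?E = "ltr_min_marks n \<pi>"
  have Li: "L i = max (mark_level ?E i) (lehmer \<pi> k)"
    using shape[of i] prefix_min_eq_mark_level_of_marks[of i] i k by (simp add: phi_code_def)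
  show ?thesis
  proof (cases "mark_level ?E i < L i")
    case True
    then have "lehmer \<pi> k = L i"
      using Li by (cases "mark_level ?E i \<le> lehmer \<pi> k") (simp_all add: max_def)
    then show ?thesis using True mark_code_Suc[OF i(2), of ?E] i by simp
  next
    case False
    then have "lehmer \<pi> k \<le> mark_level ?E i" using Li by simp
    then have "mark_level ?E k = lehmer \<pi> k"
      using prefix_min_Suc_eq_min_lehmer[OF perm k] prefix_min_eq_mark_level_of_marks[OF k]
        prefix_min_eq_mark_level_of_marks[of i] i k by simp
    then show ?thesis using False mark_code_Suc[OF i(2)] i by simp
  qed
qed

end

definition fibre :: "(nat \<Rightarrow> nat) set" where
  "fibre = {\<pi>. \<pi> permutes {1..n} \<and> schroeder n \<pi> \<and> (\<forall>i\<in>{1..n}. phi_code n \<pi> i = L i)}"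

definition corner_choices :: "nat set set" where
  "corner_choices = {E. boundary_corners \<subseteq> E \<and> E \<subseteq> corners n L}"

lemma bij_betw_ltr_min_marks: "bij_betw (ltr_min_marks n) fibre corner_choices"
proof (rule bij_betw_imageI)
  show "inj_on (ltr_min_marks n) fibre"
  proof
    fix \<pi> \<sigma> assume "\<pi> \<in> fibre" "\<sigma> \<in> fibre" and eq: "ltr_min_marks n \<pi> = ltr_min_marks n \<sigma>"
    then have \<pi>: "\<pi> permutes {1..n}" "schroeder n \<pi>" "\<And>i. i \<in> {1..n} \<Longrightarrow> phi_code n \<pi> i = L i"
      and \<sigma>: "\<sigma> permutes {1..n}" "schroeder n \<sigma>" "\<And>i. i \<in> {1..n} \<Longrightarrow> phi_code n \<sigma> i = L i"
      by (auto simp: fibre_def)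
    show "\<pi> = \<sigma>"
      using lehmer_inj[OF \<pi>(1) \<sigma>(1)] lehmer_eq_mark_code[OF \<pi>] lehmer_eq_mark_code[OF \<sigma>] eq by simp
  qed
  show "ltr_min_marks n ` fibre = corner_choices"
  proof
    show "ltr_min_marks n ` fibre \<subseteq> corner_choices"
    proof
      fix E assume "E \<in> ltr_min_marks n ` fibre"
      then obtain \<pi> where E: "E = ltr_min_marks n \<pi>" and "\<pi> \<in> fibre" by blast
      then have \<pi>: "\<pi> permutes {1..n}" "schroeder n \<pi>" "\<And>i. i \<in> {1..n} \<Longrightarrow> phi_code n \<pi> i = L i"
        by (auto simp: fibre_def)
      show "E \<in> corner_choices"
        using ltr_min_marks_subset_corners[OF \<pi>] boundary_subset_ltr_min_marks[OF \<pi>] E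
        by (simp add: corner_choices_def)
    qed
    show "corner_choices \<subseteq> ltr_min_marks n ` fibre"
    proof
      fix E assume "E \<in> corner_choices"
      then have marks: "E \<subseteq> corners n L" and boundary: "boundary_corners \<subseteq> E"
        by (auto simp: corner_choices_def)
      obtain \<pi> where \<pi>: "\<pi> permutes {1..n}" "\<And>k. k \<in> {1..n} \<Longrightarrow> lehmer \<pi> k = mark_code E k"
        using lehmer_surj[of n "mark_code E"] mark_code_le[OF marks boundary] by blast
      have "\<pi> \<in> fibre"
        using schroeder_if_lehmer_eq_mark_code[OF marks boundary \<pi>]
          phi_code_eq_L[OF marks boundary \<pi>] \<pi>(1) by (simp add: fibre_def)
      moreover have "ltr_min_marks n \<pi> = E"
        by (rule ltr_min_marks_eq[OF marks boundary \<pi>])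
      ultimately show "E \<in> ltr_min_marks n ` fibre" by blast
    qed
  qed
qed

lemma card_corner_choices: "card corner_choices = 2 ^ card inner_corners"
proof -
  have disj: "inner_corners \<inter> boundary_corners = {}"
    by (auto simp: inner_corners_def boundary_corners_def)
  have "bij_betw (\<lambda>T. T \<union> boundary_corners) (Pow inner_corners) corner_choices"
  proof (rule bij_betw_imageI)
    show "inj_on (\<lambda>T. T \<union> boundary_corners) (Pow inner_corners)"
      using disj by (intro inj_onI) blast
    show "(\<lambda>T. T \<union> boundary_corners) ` Pow inner_corners = corner_choices"
    proof
      show "(\<lambda>T. T \<union> boundary_corners) ` Pow inner_corners \<subseteq> corner_choices"
        by (auto simp: inner_corners_def boundary_corners_def corner_choices_def)
      show "corner_choices \<subseteq> (\<lambda>T. T \<union> boundary_corners) ` Pow inner_corners"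
      proof
        fix E assume "E \<in> corner_choices"
        then have "E = (E \<inter> inner_corners) \<union> boundary_corners" "E \<inter> inner_corners \<in> Pow inner_corners"
          by (auto simp: inner_corners_def boundary_corners_def corner_choices_def)
        then show "E \<in> (\<lambda>T. T \<union> boundary_corners) ` Pow inner_corners" by blast
      qed
    qed
  qed
  moreover have "finite inner_corners"
    by (rule finite_subset[of _ "{..<n}"]) (auto simp: inner_corners_def corners_def)
  ultimately show ?thesis by (simp add: bij_betw_same_card[symmetric] card_Pow)
qed

lemma card_fibre: "card fibre = 2 ^ card inner_corners"
  using bij_betw_same_card[OF bij_betw_ltr_min_marks] card_corner_choices by simp

end

theorem proposition2p8:
  fixes n :: nat and \<sigma> :: "nat \<Rightarrow> nat"
  assumes "\<sigma> permutes {1..n}" and "avoids n \<sigma> [1,3,2]"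
  shows "card {\<pi>. \<pi> permutes {1..n} \<and> schroeder n \<pi> \<and> phi n \<pi> = \<sigma>}
         = 2 ^ card {(i,j) \<in> ess n \<sigma>. i + j < n}"
proof -
  have dom: "dominant n \<sigma>"
    using rank_eq_0_if_avoids_132[OF assms] by (simp add: dominant_def)
  interpret staircase_shape n "lehmer \<sigma>"
    using dominant_lehmer_antimono[OF assms(1) dom] lehmer_last[OF assms(1)] lehmer_le[OF assms(1)]
    by unfold_locales
  have "{\<pi>. \<pi> permutes {1..n} \<and> schroeder n \<pi> \<and> phi n \<pi> = \<sigma>} = fibre"
    unfolding fibre_def using phi_eq_iff_lehmer_eq_phi_code[OF _ _ assms(1)] by blast
  moreover have "{(i,j) \<in> ess n \<sigma>. i + j < n} = (\<lambda>i. (i, lehmer \<sigma> i)) ` inner_corners"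
    using ess_dominant[OF assms(1) dom] by (auto simp: corner_cells_def inner_corners_def)
  moreover have "inj_on (\<lambda>i. (i, lehmer \<sigma> i)) inner_corners"
    by (rule inj_onI) simp
  ultimately show ?thesis
    using card_fibre by (simp add: card_image)
qed

end
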